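(* The contracting arborification $\mathfrak a:\mathcal H^\Omega_<\to\mathcal H^\Omega$ intertwines the internal coproducts: $\Gamma\circ\mathfrak a=(\mathfrak a\otimes\mathfrak a)\circ\Gamma$, where $\Gamma$ on the left is the decomposition coproduct on words and $\Gamma$ on the right is the extraction-contraction coproduct on decorated forests.
   Context: Let $\bm k$ be a field, $\Omega$ a set with a commutative semigroup law written additively ($[a+b]$ the sum), $\Omega^*$ the words on $\Omega$ with empty word $\mathbf 1$, $\|\bm\omega\|=[\omega_1+\cdots+\omega_n]$ the weight of a nonempty word, and $\mathcal H^\Omega$ the $\bm k$-span of $\Omega^*$ with quasi-shuffle product $\star$ ($\mathbf 1\star\bm\omega=\bm\omega\star\mathbf 1=\bm\omega$, $a\bm u\star b\bm v=a(\bm u\star b\bm v)+b(a\bm u\star\bm v)+[a+b](\bm u\star\bm v)$). Word coproduct: $\Gamma(\mathbf 1)=\mathbf 1\otimes\mathbf 1$, and for $\bm\omega\ne\mathbf 1$, $\Gamma(\bm\omega)=\sum_{s\ge1}\sum_{\bm\omega=\bm\omega^1\cdots\bm\omega^s}\|\bm\omega^1\|\cdots\|\bm\omega^s\|\otimes\bm\omega^1\star\cdots\star\bm\omega^s$ (pieces nonempty; $\|\bm\omega^1\|\cdots\|\bm\omega^s\|$ the word of their weights). A rooted forest is a finite directed acyclic graph in which each vertex has at most one incoming edge; its vertex set $\mathcal V(F)$ is partially ordered by $u\le v$ iff there is a directed path from a root (vertex without incoming edge) to $v$ through $u$. An $\Omega$-decorated forest carries a map $d:\mathcal V(F)\to\Omega$.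 $\mathcal H^\Omega_<$ is the $\bm k$-span of (isomorphism classes of) $\Omega$-decorated rooted forests, a commutative algebra under disjoint union with unit the empty forest $\mathbf 1$. A covering subforest $G$ of $F$ is a partition of $\mathcal V(F)$ into blocks each inducing a connected subgraph, identified with the decorated forest obtained from $F$ by keeping only the edges inside blocks; $F/G$ is the decorated forest obtained by contracting each block to a single vertex decorated by the $\Omega$-sum of the decorations of the block. Forest coproduct: $\Gamma(F)=\sum_{G}F/G\otimes G$, over all covering subforests $G$ of $F$ (with $\Gamma(\mathbf 1)=\mathbf 1\otimes\mathbf 1$). For a surjection $\sigma:\mathcal V(F)\to\{1,\ldots,s\}$, $F^\sigma$ denotes the word $F^\sigma_1\cdots F^\sigma_s$ with $F^\sigma_j=[\sum_{\sigma(v)=j}d(v)]$. The contracting arborification is the linear map $\mathfrak a:\mathcal H^\Omega_<\to\mathcal H^\Omega$ with $\mathfrak a(\mathbf 1)=\mathbf 1$ and $\mathfrak a(F)=\sum_{s\ge1}\sum_{\sigma}F^\sigma$ for nonempty $F$, the inner sum over surjections $\sigma:\mathcal V(F)\to\{1,\ldots,s\}$ such that $u<v$ implies $\sigma(u)<\sigma(v)$. *)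

theory Defs
  imports "HOL-Library.Multiset" "HOL-Library.Disjoint_Sets"
begin

text \<open>Elements of the k-span of words are represented by their coefficients; all coefficients
  occurring here are natural numbers, so we compute with multisets and cast counts into k.\<close>

fun wt :: "'a::ab_semigroup_add list \<Rightarrow> 'a" where
  "wt [a] = a"
| "wt (a # b # u) = a + wt (b # u)"
| "wt [] = undefined"

fun qsh :: "'a::ab_semigroup_add list \<Rightarrow> 'a list \<Rightarrow> 'a list multiset" where
  "qsh [] v = {#v#}"
| "qsh u [] = {#u#}"
| "qsh (a # u) (b # v) =
     image_mset ((#) a) (qsh u (b # v))
   + image_mset ((#) b) (qsh (a # u) v)
   + image_mset ((#) (a + b)) (qsh u v)"

definition qsh_mm :: "'a::ab_semigroup_add list multiset \<Rightarrow> 'a list multiset \<Rightarrow> 'a list multiset" where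
  "qsh_mm M N = (\<Sum>u\<in>#M. \<Sum>v\<in>#N. qsh u v)"

definition qsh_list :: "'a::ab_semigroup_add list list \<Rightarrow> 'a list multiset" where
  "qsh_list ps = foldr (\<lambda>p acc. qsh_mm {#p#} acc) ps {#[]#}"

text \<open>Tensor products of linear combinations (basis of the tensor product = pairs).\<close>
definition tensor :: "'b multiset \<Rightarrow> 'c multiset \<Rightarrow> ('b \<times> 'c) multiset" where
  "tensor A B = (\<Sum>x\<in>#A. image_mset (Pair x) B)"

text \<open>Word coproduct on a single word. For the empty word the only decomposition is the empty
  one, giving 1 \<otimes> 1; for nonempty words the decompositions have s \<ge> 1 nonempty pieces.\<close>
definition coprod_word :: "'a::ab_semigroup_add list \<Rightarrow> ('a list \<times> 'a list) multiset" where
  "coprod_word w =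
     (\<Sum>ps\<in>{ps. concat ps = w \<and> (\<forall>p\<in>set ps. p \<noteq> [])}.
        image_mset (Pair (map wt ps)) (qsh_list ps))"

definition coprod_words :: "'a::ab_semigroup_add list multiset \<Rightarrow> ('a list \<times> 'a list) multiset" where
  "coprod_words M = (\<Sum>w\<in>#M. coprod_word w)"

type_synonym 'a forest = "nat set \<times> (nat \<times> nat) set \<times> (nat \<Rightarrow> 'a)"

definition is_forest :: "nat set \<Rightarrow> (nat \<times> nat) set \<Rightarrow> bool" where
  "is_forest V E \<longleftrightarrow> finite V \<and> E \<subseteq> V \<times> V \<and> acyclic E \<and>
     (\<forall>u u' v. (u, v) \<in> E \<longrightarrow> (u', v) \<in> E \<longrightarrow> u = u')"

text \<open>Strict forest order: u < v iff u is a proper ancestor of v.\<close>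
definition forest_less :: "(nat \<times> nat) set \<Rightarrow> nat \<Rightarrow> nat \<Rightarrow> bool" where
  "forest_less E u v \<longleftrightarrow> (u, v) \<in> E\<^sup>+"

definition dsum :: "(nat \<Rightarrow> 'a::ab_semigroup_add) \<Rightarrow> nat set \<Rightarrow> 'a" where
  "dsum d S = wt (map d (sorted_list_of_set S))"

definition order_surjs :: "nat set \<Rightarrow> (nat \<times> nat) set \<Rightarrow> nat \<Rightarrow> (nat \<Rightarrow> nat) set" where
  "order_surjs V E s = {\<sigma>. (\<forall>v. v \<notin> V \<longrightarrow> \<sigma> v = 0) \<and> \<sigma> ` V = {1..s} \<and>
      (\<forall>u\<in>V. \<forall>v\<in>V. forest_less E u v \<longrightarrow> \<sigma> u < \<sigma> v)}"

definition sigma_word :: "nat set \<Rightarrow> (nat \<Rightarrow> 'a::ab_semigroup_add) \<Rightarrow> nat \<Rightarrow> (nat \<Rightarrow> nat) \<Rightarrow> 'a list" where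
  "sigma_word V d s \<sigma> = map (\<lambda>j. dsum d {v\<in>V. \<sigma> v = j}) [1..<s+1]"

text \<open>Contracting arborification (surjections onto {1..s}; for s > card V there are none).\<close>
definition arb :: "'a::ab_semigroup_add forest \<Rightarrow> 'a list multiset" where
  "arb F = (case F of (V, E, d) \<Rightarrow>
     if V = {} then {#[]#}
     else (\<Sum>s\<in>{1..card V}. \<Sum>\<sigma>\<in>order_surjs V E s. {#sigma_word V d s \<sigma>#}))"

text \<open>Covering subforests: partitions of V into blocks inducing connected subgraphs.\<close>
definition covering :: "nat set \<Rightarrow> (nat \<times> nat) set \<Rightarrow> nat set set \<Rightarrow> bool" where
  "covering V E P \<longleftrightarrow> partition_on V P \<and>
     (\<forall>B\<in>P. \<forall>x\<in>B. \<forall>y\<in>B. (x, y) \<in> ((E \<inter> B \<times> B) \<union> (E \<inter> B \<times> B)\<inverse>)\<^sup>*)"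

definition subforest :: "'a forest \<Rightarrow> nat set set \<Rightarrow> 'a forest" where
  "subforest F P = (case F of (V, E, d) \<Rightarrow> (V, E \<inter> (\<Union>B\<in>P. B \<times> B), d))"

text \<open>Contraction F/G: each block B becomes the vertex Min B, decorated by the sum over B.\<close>
definition contract :: "'a::ab_semigroup_add forest \<Rightarrow> nat set set \<Rightarrow> 'a forest" where
  "contract F P = (case F of (V, E, d) \<Rightarrow>
     (Min ` P,
      {(Min B, Min B') | B B'. B \<in> P \<and> B' \<in> P \<and> B \<noteq> B' \<and> (\<exists>u\<in>B. \<exists>v\<in>B'. (u, v) \<in> E)},
      (\<lambda>x. dsum d {v\<in>V. \<exists>B\<in>P. v \<in> B \<and> Min B = x})))"

definition coprod_forest :: "'a::ab_semigroup_add forest \<Rightarrow> ('a forest \<times> 'a forest) multiset" where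
  "coprod_forest F = (case F of (V, E, d) \<Rightarrow>
     (\<Sum>P\<in>{P. covering V E P}. {#(contract F P, subforest F P)#}))"

definition arb_tensor :: "('a::ab_semigroup_add forest \<times> 'a forest) multiset \<Rightarrow> ('a list \<times> 'a list) multiset" where
  "arb_tensor M = (\<Sum>(F1, F2)\<in>#M. tensor (arb F1) (arb F2))"

end

theory Submission
  imports Defs
begin

text \<open>
  Both sides are expanded over surjections onto initial segments of the positive integers.
  The left side sums, over the strictly order-preserving surjections \<open>\<sigma>\<close> of \<open>F\<close>, the coproduct
  of the word \<open>F\<^sup>\<sigma>\<close>.  On the right side, a covering subforest \<open>G\<close> together with an
  order-preserving surjection of \<open>F/G\<close> is the same thing as a surjection \<open>\<kappa>\<close> of \<open>F\<close> that is
  only weakly monotone along edges: the blocks of \<open>G\<close> are the connected components of the level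
  sets of \<open>\<kappa>\<close>.  Cutting the word \<open>F\<^sup>\<sigma>\<close> after its first piece, or splitting off the first level
  of \<open>\<kappa>\<close>, expresses both sides through the same recursion over nonempty order ideals \<open>K\<close> of
  \<open>F\<close>.  The only input beyond bookkeeping is that the arborification of a disjoint union of
  forests is the quasi-shuffle of their arborifications, which is what produces the
  quasi-shuffle factors of the word coproduct.
\<close>

section \<open>Weights of vertex sets\<close>

lemma wt_Cons: "xs \<noteq> [] \<Longrightarrow> wt (a # xs) = a + wt xs"
  by (cases xs) auto

lemma wt_map_insort: "xs \<noteq> [] \<Longrightarrow> wt (map d (insort x xs)) = d x + wt (map d xs)"
proof (induction xs)
  case (Cons y ys)
  show ?case
  proof (cases "ys = []")
    case True
    then show ?thesis by (auto simp: add.commute)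
  next
    case False
    then have "insort x ys \<noteq> []" by (cases ys) auto
    with False Cons.IH show ?thesis by (auto simp: wt_Cons add_ac)
  qed
qed simp

lemma dsum_singleton [simp]: "dsum d {x} = d x"
  by (simp add: dsum_def)

lemma dsum_insert:
  assumes "finite S" "S \<noteq> {}" "x \<notin> S"
  shows "dsum d (insert x S) = d x + dsum d S"
  using assms by (simp add: dsum_def sorted_list_of_set_insert wt_map_insort)

lemma dsum_Un_disjoint:
  assumes "finite A" "A \<noteq> {}" "finite B" "B \<noteq> {}" "A \<inter> B = {}"
  shows "dsum d (A \<union> B) = dsum d A + dsum d B"
  using assms(1,2,5)
proof (induction A rule: finite_ne_induct)
  case (singleton x)
  then show ?case using assms(3,4) by (simp add: dsum_insert)
next
  case (insert x F)
  have "dsum d (insert x F \<union> B) = dsum d (insert x (F \<union> B))" by simp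
  also have "\<dots> = d x + dsum d (F \<union> B)"
    using insert assms(3) by (intro dsum_insert) auto
  also have "\<dots> = d x + (dsum d F + dsum d B)" using insert by auto
  also have "\<dots> = dsum d (insert x F) + dsum d B"
    using insert.hyps by (simp add: dsum_insert add.assoc)
  finally show ?case .
qed

lemma dsum_UN_disjoint:
  assumes "finite I" "I \<noteq> {}" "\<And>i. i \<in> I \<Longrightarrow> finite (A i) \<and> A i \<noteq> {}"
    "disjoint_family_on A I"
  shows "dsum d (\<Union>i\<in>I. A i) = dsum (\<lambda>i. dsum d (A i)) I"
  using assms
proof (induction I rule: finite_ne_induct)
  case (insert x F)
  have "dsum d (A x \<union> (\<Union>i\<in>F. A i)) = dsum d (A x) + dsum d (\<Union>i\<in>F. A i)"
    using insert by (intro dsum_Un_disjoint) (auto simp: disjoint_family_on_def)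
  also have "\<dots> = dsum d (A x) + dsum (\<lambda>i. dsum d (A i)) F"
    using insert by (auto simp: disjoint_family_on_def)
  finally show ?case using insert.hyps by (simp add: dsum_insert)
qed simp

section \<open>Surjections onto initial segments\<close>

text \<open>
  Maps vanish off \<open>V\<close>, so that they are determined by their values on \<open>V\<close>.  For \<open>R = (<)\<close>
  these are the surjections of the arborification, for \<open>R = (\<le>)\<close> the weakly monotone ones.
\<close>
definition mono_surjs :: "(nat \<Rightarrow> nat \<Rightarrow> bool) \<Rightarrow> nat set \<Rightarrow> (nat \<times> nat) set \<Rightarrow> (nat \<Rightarrow> nat) set"
  where "mono_surjs R V E = {\<sigma>. (\<forall>v. v \<notin> V \<longrightarrow> \<sigma> v = 0) \<and> \<sigma> ` V = {1..card (\<sigma> ` V)} \<and>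
      (\<forall>(u, v)\<in>E. R (\<sigma> u) (\<sigma> v))}"

definition admissible_rel :: "(nat \<Rightarrow> nat \<Rightarrow> bool) \<Rightarrow> bool"
  where "admissible_rel R \<longleftrightarrow> (\<forall>a b. R a b \<longrightarrow> a \<le> b) \<and> (\<forall>a b. a < b \<longrightarrow> R a b) \<and>
      (\<forall>a b c. R (a + c) (b + c) = R a b)"

definition induced_edges :: "(nat \<times> nat) set \<Rightarrow> nat set \<Rightarrow> (nat \<times> nat) set"
  where "induced_edges E K = E \<inter> K \<times> K"

definition order_ideal :: "nat set \<Rightarrow> (nat \<times> nat) set \<Rightarrow> nat set \<Rightarrow> bool"
  where "order_ideal V E K \<longleftrightarrow> K \<subseteq> V \<and> (\<forall>(u, v)\<in>E. v \<in> K \<longrightarrow> u \<in> K)"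

definition nonempty_ideals :: "nat set \<Rightarrow> (nat \<times> nat) set \<Rightarrow> nat set set"
  where "nonempty_ideals V E = {K. order_ideal V E K \<and> K \<noteq> {}}"

definition lower_part :: "(nat \<Rightarrow> nat) \<Rightarrow> nat \<Rightarrow> nat set \<Rightarrow> nat set"
  where "lower_part \<sigma> m V = {v\<in>V. \<sigma> v \<le> m}"

definition lower_map :: "(nat \<Rightarrow> nat) \<Rightarrow> nat \<Rightarrow> nat set \<Rightarrow> nat \<Rightarrow> nat"
  where "lower_map \<sigma> m V = (\<lambda>v. if v \<in> V \<and> \<sigma> v \<le> m then \<sigma> v else 0)"

definition upper_map :: "(nat \<Rightarrow> nat) \<Rightarrow> nat \<Rightarrow> nat set \<Rightarrow> nat \<Rightarrow> nat"
  where "upper_map \<sigma> m V = (\<lambda>v. if v \<in> V \<and> m < \<sigma> v then \<sigma> v - m else 0)"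

definition glue_maps :: "nat set \<Rightarrow> (nat \<Rightarrow> nat) \<Rightarrow> (nat \<Rightarrow> nat) \<Rightarrow> nat set \<Rightarrow> nat \<Rightarrow> nat"
  where "glue_maps K \<sigma>1 \<sigma>2 V =
    (\<lambda>v. if v \<in> K then \<sigma>1 v else if v \<in> V then \<sigma>2 v + card (\<sigma>1 ` K) else 0)"

definition unit_map :: "nat set \<Rightarrow> nat \<Rightarrow> nat"
  where "unit_map S = (\<lambda>v. if v \<in> S then 1 else 0)"

lemma admissible_less: "admissible_rel (<)"
  and admissible_le: "admissible_rel (\<le>)"
  by (auto simp: admissible_rel_def)

lemma induced_edges_subset: "Y \<subseteq> X \<Longrightarrow> induced_edges (induced_edges E X) Y = induced_edges E Y"
  by (auto simp: induced_edges_def)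

lemma finite_nonempty_ideals: "finite V \<Longrightarrow> finite (nonempty_ideals V E)"
  by (rule finite_subset[of _ "Pow V"]) (auto simp: nonempty_ideals_def order_ideal_def)

lemma mono_surjsD:
  assumes "\<sigma> \<in> mono_surjs R V E"
  shows "\<And>v. v \<notin> V \<Longrightarrow> \<sigma> v = 0" "\<sigma> ` V = {1..card (\<sigma> ` V)}"
    "\<And>u v. (u, v) \<in> E \<Longrightarrow> R (\<sigma> u) (\<sigma> v)"
  using assms by (auto simp: mono_surjs_def)

lemma mono_surjsI:
  assumes "\<And>v. v \<notin> V \<Longrightarrow> \<sigma> v = 0" "\<sigma> ` V = {1..s}" "\<And>u v. (u, v) \<in> E \<Longrightarrow> R (\<sigma> u) (\<sigma> v)"
  shows "\<sigma> \<in> mono_surjs R V E" "card (\<sigma> ` V) = s"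
  using assms by (auto simp: mono_surjs_def)

lemma mono_surjs_range:
  "\<sigma> \<in> mono_surjs R V E \<Longrightarrow> v \<in> V \<Longrightarrow> 1 \<le> \<sigma> v \<and> \<sigma> v \<le> card (\<sigma> ` V)"
  using mono_surjsD(2)[of \<sigma> R V E] by (metis atLeastAtMost_iff image_eqI)

lemma mono_surjs_hit:
  "\<sigma> \<in> mono_surjs R V E \<Longrightarrow> 1 \<le> j \<Longrightarrow> j \<le> card (\<sigma> ` V) \<Longrightarrow> \<exists>v\<in>V. \<sigma> v = j"
  using mono_surjsD(2)[of \<sigma> R V E] by (metis atLeastAtMost_iff imageE)

lemma mono_surjs_empty: "mono_surjs R {} {} = {\<lambda>_. 0}"
  by (auto simp: mono_surjs_def)

lemma one_le_card_image:
  "finite V \<Longrightarrow> V \<noteq> {} \<Longrightarrow> 1 \<le> card (\<sigma> ` V)"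
  by (simp add: Suc_le_eq card_gt_0_iff)

lemma finite_mono_surjs:
  assumes "finite V" shows "finite (mono_surjs R V E)"
proof (rule finite_subset)
  show "mono_surjs R V E \<subseteq> {f. \<forall>x. (x \<in> V \<longrightarrow> f x \<in> {0..card V}) \<and> (x \<notin> V \<longrightarrow> f x = 0)}"
  proof safe
    fix \<sigma> x assume \<sigma>: "\<sigma> \<in> mono_surjs R V E"
    show "\<sigma> x \<in> {0..card V}" if "x \<in> V"
      using mono_surjs_range[OF \<sigma> that] card_image_le[OF assms, of \<sigma>] by simp
    show "\<sigma> x = 0" if "x \<notin> V" using mono_surjsD(1)[OF \<sigma> that] .
  qed
  show "finite {f. \<forall>x. (x \<in> V \<longrightarrow> f x \<in> {0..card V}) \<and> (x \<notin> V \<longrightarrow> f x = (0::nat))}"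
    using assms by (intro finite_set_of_finite_funs) auto
qed

lemma unit_map_mono_surjs:
  assumes "S \<noteq> {}" "R 1 1 \<or> induced_edges E S = {}"
  shows "unit_map S \<in> mono_surjs R S (induced_edges E S)" "card (unit_map S ` S) = 1"
proof -
  have "unit_map S ` S = {1..1}" using assms by (auto simp: unit_map_def)
  moreover have "\<And>u v. (u, v) \<in> induced_edges E S \<Longrightarrow> R (unit_map S u) (unit_map S v)"
    using assms(2) by (auto simp: induced_edges_def unit_map_def)
  ultimately show "unit_map S \<in> mono_surjs R S (induced_edges E S)" "card (unit_map S ` S) = 1"
    using mono_surjsI[of S "unit_map S" 1 "induced_edges E S" R] by (auto simp: unit_map_def)
qed

lemma lower_part_nonempty_ideal:
  assumes R: "admissible_rel R" and E: "E \<subseteq> V \<times> V" and \<sigma>: "\<sigma> \<in> mono_surjs R V E"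
    and m: "1 \<le> m" "m \<le> card (\<sigma> ` V)"
  shows "lower_part \<sigma> m V \<in> nonempty_ideals V E"
proof -
  obtain v1 where "v1 \<in> V" "\<sigma> v1 = 1" using mono_surjs_hit[OF \<sigma>, of 1] m by auto
  moreover have "\<And>a b. R a b \<Longrightarrow> a \<le> b" using R by (simp add: admissible_rel_def)
  ultimately show ?thesis
    using m E mono_surjsD(3)[OF \<sigma>]
    by (fastforce simp: nonempty_ideals_def order_ideal_def lower_part_def)
qed

lemma lower_map_mono_surjs:
  assumes \<sigma>: "\<sigma> \<in> mono_surjs R V E" and m: "m \<le> card (\<sigma> ` V)"
  defines "K \<equiv> lower_part \<sigma> m V"
  shows "lower_map \<sigma> m V \<in> mono_surjs R K (induced_edges E K)" "card (lower_map \<sigma> m V ` K) = m"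
proof -
  have zero: "\<And>v. v \<notin> K \<Longrightarrow> lower_map \<sigma> m V v = 0"
    by (auto simp: lower_map_def K_def lower_part_def)
  have image: "lower_map \<sigma> m V ` K = {1..m}"
  proof
    show "lower_map \<sigma> m V ` K \<subseteq> {1..m}"
      using mono_surjs_range[OF \<sigma>] by (auto simp: lower_map_def K_def lower_part_def)
    show "{1..m} \<subseteq> lower_map \<sigma> m V ` K"
    proof
      fix j assume j: "j \<in> {1..m}"
      then obtain v where "v \<in> V" "\<sigma> v = j" using mono_surjs_hit[OF \<sigma>, of j] m by auto
      with j show "j \<in> lower_map \<sigma> m V ` K"
        by (auto simp: lower_map_def K_def lower_part_def intro!: image_eqI[of _ _ v])
    qed
  qed
  have edges: "R (lower_map \<sigma> m V u) (lower_map \<sigma> m V v)" if "(u, v) \<in> induced_edges E K" for u v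
    using that mono_surjsD(3)[OF \<sigma>] by (auto simp: induced_edges_def K_def lower_part_def lower_map_def)
  show "lower_map \<sigma> m V \<in> mono_surjs R K (induced_edges E K)" "card (lower_map \<sigma> m V ` K) = m"
    using mono_surjsI[of K "lower_map \<sigma> m V" m "induced_edges E K" R, OF zero image edges] by auto
qed

lemma upper_map_mono_surjs:
  assumes R: "admissible_rel R" and \<sigma>: "\<sigma> \<in> mono_surjs R V E" and m: "m \<le> card (\<sigma> ` V)"
  defines "K \<equiv> lower_part \<sigma> m V"
  shows "upper_map \<sigma> m V \<in> mono_surjs R (V - K) (induced_edges E (V - K))"
    "card (upper_map \<sigma> m V ` (V - K)) = card (\<sigma> ` V) - m"
proof -
  have zero: "\<And>v. v \<notin> V - K \<Longrightarrow> upper_map \<sigma> m V v = 0"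
    by (auto simp: upper_map_def K_def lower_part_def)
  have image: "upper_map \<sigma> m V ` (V - K) = {1..card (\<sigma> ` V) - m}"
  proof
    show "upper_map \<sigma> m V ` (V - K) \<subseteq> {1..card (\<sigma> ` V) - m}"
      using mono_surjs_range[OF \<sigma>] by (force simp: upper_map_def K_def lower_part_def)
    show "{1..card (\<sigma> ` V) - m} \<subseteq> upper_map \<sigma> m V ` (V - K)"
    proof
      fix j assume j: "j \<in> {1..card (\<sigma> ` V) - m}"
      then have "1 \<le> j + m" "j + m \<le> card (\<sigma> ` V)" using m by auto
      then obtain v where "v \<in> V" "\<sigma> v = j + m" using mono_surjs_hit[OF \<sigma>, of "j + m"] by auto
      with j show "j \<in> upper_map \<sigma> m V ` (V - K)"
        by (auto simp: upper_map_def K_def lower_part_def intro!: image_eqI[of _ _ v])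
    qed
  qed
  have edges: "R (upper_map \<sigma> m V u) (upper_map \<sigma> m V v)"
    if "(u, v) \<in> induced_edges E (V - K)" for u v
  proof -
    have "R (\<sigma> u) (\<sigma> v)" "m < \<sigma> u" "m < \<sigma> v" "u \<in> V" "v \<in> V"
      using that mono_surjsD(3)[OF \<sigma>] by (auto simp: induced_edges_def K_def lower_part_def)
    moreover have "R (\<sigma> u - m + m) (\<sigma> v - m + m) = R (\<sigma> u - m) (\<sigma> v - m)"
      using R by (simp add: admissible_rel_def)
    ultimately show ?thesis by (simp add: upper_map_def)
  qed
  show "upper_map \<sigma> m V \<in> mono_surjs R (V - K) (induced_edges E (V - K))"
    "card (upper_map \<sigma> m V ` (V - K)) = card (\<sigma> ` V) - m"
    using mono_surjsI[of "V - K" "upper_map \<sigma> m V" "card (\<sigma> ` V) - m"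
        "induced_edges E (V - K)" R, OF zero image edges] by auto
qed

lemma glue_lower_upper:
  assumes \<sigma>: "\<sigma> \<in> mono_surjs R V E" and m: "card (lower_map \<sigma> m V ` lower_part \<sigma> m V) = m"
  shows "glue_maps (lower_part \<sigma> m V) (lower_map \<sigma> m V) (upper_map \<sigma> m V) V = \<sigma>"
proof
  fix v
  show "glue_maps (lower_part \<sigma> m V) (lower_map \<sigma> m V) (upper_map \<sigma> m V) V v = \<sigma> v"
    using mono_surjsD(1)[OF \<sigma>, of v]
    unfolding glue_maps_def m by (auto simp: lower_map_def upper_map_def lower_part_def)
qed

context
  fixes K V :: "nat set" and \<sigma>1 \<sigma>2 :: "nat \<Rightarrow> nat"
    and R1 R2 :: "nat \<Rightarrow> nat \<Rightarrow> bool" and E1 E2 :: "(nat \<times> nat) set"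
  assumes KV: "K \<subseteq> V" and \<sigma>1: "\<sigma>1 \<in> mono_surjs R1 K E1" and \<sigma>2: "\<sigma>2 \<in> mono_surjs R2 (V - K) E2"
begin

lemma image_glue_maps: "glue_maps K \<sigma>1 \<sigma>2 V ` V = {1..card (\<sigma>1 ` K) + card (\<sigma>2 ` (V - K))}"
proof
  let ?m = "card (\<sigma>1 ` K)" and ?s2 = "card (\<sigma>2 ` (V - K))"
  show "glue_maps K \<sigma>1 \<sigma>2 V ` V \<subseteq> {1..?m + ?s2}"
    using mono_surjs_range[OF \<sigma>1] mono_surjs_range[OF \<sigma>2] by (force simp: glue_maps_def)
  show "{1..?m + ?s2} \<subseteq> glue_maps K \<sigma>1 \<sigma>2 V ` V"
  proof
    fix j assume j: "j \<in> {1..?m + ?s2}"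
    show "j \<in> glue_maps K \<sigma>1 \<sigma>2 V ` V"
    proof (cases "j \<le> ?m")
      case True
      then obtain v where "v \<in> K" "\<sigma>1 v = j" using mono_surjs_hit[OF \<sigma>1, of j] j by auto
      then show ?thesis using KV by (auto simp: glue_maps_def intro!: image_eqI[of _ _ v])
    next
      case False
      have "1 \<le> j - ?m" "j - ?m \<le> ?s2" using False j by auto
      then obtain v where "v \<in> V - K" "\<sigma>2 v = j - ?m"
        using mono_surjs_hit[OF \<sigma>2, of "j - ?m"] by blast
      then show ?thesis using False by (auto simp: glue_maps_def intro!: image_eqI[of _ _ v])
    qed
  qed
qed

lemma glue_maps_cut:
  defines "m \<equiv> card (\<sigma>1 ` K)"
  shows "lower_part (glue_maps K \<sigma>1 \<sigma>2 V) m V = K" "lower_map (glue_maps K \<sigma>1 \<sigma>2 V) m V = \<sigma>1"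
    "upper_map (glue_maps K \<sigma>1 \<sigma>2 V) m V = \<sigma>2"
  using mono_surjs_range[OF \<sigma>1] mono_surjs_range[OF \<sigma>2] mono_surjsD(1)[OF \<sigma>1]
    mono_surjsD(1)[OF \<sigma>2] KV
  by (force simp: lower_part_def lower_map_def upper_map_def glue_maps_def m_def)+

end

lemma glue_maps_mono_surjs:
  assumes R: "admissible_rel R" and E: "E \<subseteq> V \<times> V" and K: "K \<in> nonempty_ideals V E"
    and \<sigma>1: "\<sigma>1 \<in> mono_surjs R K (induced_edges E K)"
    and \<sigma>2: "\<sigma>2 \<in> mono_surjs R (V - K) (induced_edges E (V - K))"
  shows "glue_maps K \<sigma>1 \<sigma>2 V \<in> mono_surjs R V E"
proof -
  let ?g = "glue_maps K \<sigma>1 \<sigma>2 V"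
  have Rlt: "\<And>a b. a < b \<Longrightarrow> R a b" and Rshift: "\<And>a b c. R (a + c) (b + c) = R a b"
    using R by (auto simp: admissible_rel_def)
  have KV: "K \<subseteq> V" and ideal: "\<And>u v. (u, v) \<in> E \<Longrightarrow> v \<in> K \<Longrightarrow> u \<in> K"
    using K by (auto simp: nonempty_ideals_def order_ideal_def)
  have "R (?g u) (?g v)" if uv: "(u, v) \<in> E" for u v
  proof -
    have uV: "u \<in> V" "v \<in> V" using uv E by auto
    consider "u \<in> K" "v \<in> K" | "u \<in> K" "v \<notin> K" | "u \<notin> K" "v \<notin> K" using ideal[OF uv] by blast
    then show ?thesis
    proof cases
      case 1
      then show ?thesis using mono_surjsD(3)[OF \<sigma>1, of u v] uv
        by (auto simp: glue_maps_def induced_edges_def)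
    next
      case 2
      then show ?thesis using uV mono_surjs_range[OF \<sigma>1, of u] mono_surjs_range[OF \<sigma>2, of v]
        by (auto simp: glue_maps_def intro!: Rlt)
    next
      case 3
      then have "R (\<sigma>2 u) (\<sigma>2 v)" using uV uv mono_surjsD(3)[OF \<sigma>2, of u v]
        by (auto simp: induced_edges_def)
      then show ?thesis using 3 uV Rshift by (simp add: glue_maps_def)
    qed
  qed
  moreover have "\<And>v. v \<notin> V \<Longrightarrow> ?g v = 0" using KV by (auto simp: glue_maps_def)
  ultimately show ?thesis using mono_surjsI(1)[OF _ image_glue_maps[OF KV \<sigma>1 \<sigma>2]] by blast
qed

lemma lower_upper_bij:
  assumes R: "admissible_rel R" and V: "finite V" "E \<subseteq> V \<times> V"
  shows "bij_betw (\<lambda>(\<sigma>, m). (lower_part \<sigma> m V, lower_map \<sigma> m V, upper_map \<sigma> m V))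
    (SIGMA \<sigma>:mono_surjs R V E. {1..card (\<sigma> ` V)})
    (SIGMA K:nonempty_ideals V E.
       mono_surjs R K (induced_edges E K) \<times> mono_surjs R (V - K) (induced_edges E (V - K)))"
    (is "bij_betw ?cut ?S ?T")
proof -
  let ?glue = "\<lambda>(K, \<sigma>1, \<sigma>2). (glue_maps K \<sigma>1 \<sigma>2 V, card (\<sigma>1 ` K))"
  have "?cut x \<in> ?T \<and> ?glue (?cut x) = x" if x_in: "x \<in> ?S" for x
  proof -
    obtain \<sigma> m where x: "x = (\<sigma>, m)" and \<sigma>: "\<sigma> \<in> mono_surjs R V E"
      and m: "1 \<le> m" "m \<le> card (\<sigma> ` V)" by (cases x) (use x_in in auto)
    note lower = lower_map_mono_surjs[OF \<sigma> m(2)] and upper = upper_map_mono_surjs[OF R \<sigma> m(2)]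
    show ?thesis
      using x lower_part_nonempty_ideal[OF R V(2) \<sigma> m] lower upper glue_lower_upper[OF \<sigma> lower(2)]
      by simp
  qed
  moreover have "?glue y \<in> ?S \<and> ?cut (?glue y) = y" if y_in: "y \<in> ?T" for y
  proof -
    obtain K \<sigma>1 \<sigma>2 where y: "y = (K, \<sigma>1, \<sigma>2)" and K: "K \<in> nonempty_ideals V E"
      and \<sigma>1: "\<sigma>1 \<in> mono_surjs R K (induced_edges E K)"
      and \<sigma>2: "\<sigma>2 \<in> mono_surjs R (V - K) (induced_edges E (V - K))" by (cases y) (use y_in in auto)
    have KV: "K \<subseteq> V" and "K \<noteq> {}" using K by (auto simp: nonempty_ideals_def order_ideal_def)
    then have "1 \<le> card (\<sigma>1 ` K)" using V(1) finite_subset one_le_card_image by metis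
    then show ?thesis
      using y glue_maps_mono_surjs[OF R V(2) K \<sigma>1 \<sigma>2] glue_maps_cut[OF KV \<sigma>1 \<sigma>2]
        image_glue_maps[OF KV \<sigma>1 \<sigma>2] by simp
  qed
  ultimately show ?thesis by (intro bij_betw_byWitness[where f' = ?glue]) auto
qed

lemma lower_map_first_level:
  "\<sigma> \<in> mono_surjs R V E \<Longrightarrow> lower_map \<sigma> 1 V = unit_map (lower_part \<sigma> 1 V)"
  using mono_surjs_range[of \<sigma> R V E]
  by (force simp: lower_map_def unit_map_def lower_part_def)

text \<open>The condition on \<open>K\<close> is vacuous for \<open>R = (\<le>)\<close>; for \<open>R = (<)\<close> it says that \<open>K\<close> carries no edges.\<close>
lemma first_level_bij:
  assumes R: "admissible_rel R" and V: "finite V" "E \<subseteq> V \<times> V" "V \<noteq> {}"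
  shows "bij_betw (\<lambda>\<sigma>. (lower_part \<sigma> 1 V, upper_map \<sigma> 1 V)) (mono_surjs R V E)
    (SIGMA K:{K \<in> nonempty_ideals V E. R 1 1 \<or> induced_edges E K = {}}.
       mono_surjs R (V - K) (induced_edges E (V - K)))"
    (is "bij_betw ?cut ?S ?T")
proof -
  let ?glue = "\<lambda>(K, \<tau>). glue_maps K (unit_map K) \<tau> V"
  have "?cut \<sigma> \<in> ?T \<and> ?glue (?cut \<sigma>) = \<sigma>" if \<sigma>: "\<sigma> \<in> ?S" for \<sigma>
  proof -
    have c1: "1 \<le> card (\<sigma> ` V)" using V one_le_card_image by blast
    note lower = lower_map_mono_surjs[OF \<sigma> c1] and upper = upper_map_mono_surjs[OF R \<sigma> c1]
    have "R 1 1" if "(u, v) \<in> induced_edges E (lower_part \<sigma> 1 V)" for u v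
      using mono_surjsD(3)[OF lower(1) that] lower_map_first_level[OF \<sigma>] that
      by (simp add: unit_map_def induced_edges_def)
    then show ?thesis
      using lower_part_nonempty_ideal[OF R V(2) \<sigma> order.refl c1] upper
        glue_lower_upper[OF \<sigma> lower(2)] lower_map_first_level[OF \<sigma>] by auto
  qed
  moreover have "?glue y \<in> ?S \<and> ?cut (?glue y) = y" if y_in: "y \<in> ?T" for y
  proof -
    obtain K \<tau> where y: "y = (K, \<tau>)" and K: "K \<in> nonempty_ideals V E"
      and R11: "R 1 1 \<or> induced_edges E K = {}"
      and \<tau>: "\<tau> \<in> mono_surjs R (V - K) (induced_edges E (V - K))" by (cases y) (use y_in in auto)
    have KV: "K \<subseteq> V" and K_ne: "K \<noteq> {}" using K by (auto simp: nonempty_ideals_def order_ideal_def)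
    note unit = unit_map_mono_surjs[where R = R and E = E, OF K_ne R11]
    show ?thesis
      using y glue_maps_mono_surjs[OF R V(2) K unit(1) \<tau>] glue_maps_cut[OF KV unit(1) \<tau>] unit(2)
      by simp
  qed
  ultimately show ?thesis by (intro bij_betw_byWitness[where f' = ?glue]) auto
qed

section \<open>Arborification as a sum over surjections\<close>

definition surj_word :: "nat set \<Rightarrow> (nat \<Rightarrow> 'a::ab_semigroup_add) \<Rightarrow> (nat \<Rightarrow> nat) \<Rightarrow> 'a list"
  where "surj_word V d \<sigma> = sigma_word V d (card (\<sigma> ` V)) \<sigma>"

lemma length_surj_word: "length (surj_word V d \<sigma>) = card (\<sigma> ` V)"
  by (simp add: surj_word_def sigma_word_def)

lemma order_surjs_eq_mono_surjs:
  assumes "E \<subseteq> V \<times> V"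
  shows "order_surjs V E s = {\<sigma> \<in> mono_surjs (<) V E. card (\<sigma> ` V) = s}"
proof -
  have edges: "(\<forall>u\<in>V. \<forall>v\<in>V. forest_less E u v \<longrightarrow> \<sigma> u < \<sigma> v) \<longleftrightarrow> (\<forall>(u, v)\<in>E. \<sigma> u < \<sigma> v)"
    for \<sigma> :: "nat \<Rightarrow> nat"
  proof
    assume strict: "\<forall>(u, v)\<in>E. \<sigma> u < \<sigma> v"
    have "\<sigma> u < \<sigma> v" if "(u, v) \<in> E\<^sup>+" for u v
      using that by (induction rule: trancl_induct) (use strict in auto)
    then show "\<forall>u\<in>V. \<forall>v\<in>V. forest_less E u v \<longrightarrow> \<sigma> u < \<sigma> v" by (simp add: forest_less_def)
  qed (use assms in \<open>auto simp: forest_less_def\<close>)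
  show ?thesis
  proof (intro set_eqI iffI)
    fix \<sigma> assume "\<sigma> \<in> order_surjs V E s"
    then show "\<sigma> \<in> {\<sigma> \<in> mono_surjs (<) V E. card (\<sigma> ` V) = s}"
      using edges[of \<sigma>] unfolding order_surjs_def mono_surjs_def by auto
  next
    fix \<sigma> assume "\<sigma> \<in> {\<sigma> \<in> mono_surjs (<) V E. card (\<sigma> ` V) = s}"
    then show "\<sigma> \<in> order_surjs V E s"
      using edges[of \<sigma>] unfolding order_surjs_def mono_surjs_def by auto
  qed
qed

lemma arb_eq_sum_mono_surjs:
  assumes V: "finite V" "E \<subseteq> V \<times> V"
  shows "arb (V, E, d) = (\<Sum>\<sigma>\<in>mono_surjs (<) V E. {#surj_word V d \<sigma>#})"
proof (cases "V = {}")
  case True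
  then show ?thesis using V by (simp add: arb_def mono_surjs_empty surj_word_def sigma_word_def)
next
  case False
  have "mono_surjs (<) V E = (\<Union>s\<in>{1..card V}. order_surjs V E s)"
  proof (intro set_eqI iffI)
    fix \<sigma> assume "\<sigma> \<in> mono_surjs (<) V E"
    moreover have "1 \<le> card (\<sigma> ` V)" "card (\<sigma> ` V) \<le> card V"
      using one_le_card_image[OF V(1) False] card_image_le[OF V(1)] by auto
    ultimately show "\<sigma> \<in> (\<Union>s\<in>{1..card V}. order_surjs V E s)"
      using order_surjs_eq_mono_surjs[OF V(2)] by auto
  qed (use order_surjs_eq_mono_surjs[OF V(2)] in auto)
  then have "(\<Sum>\<sigma>\<in>mono_surjs (<) V E. {#surj_word V d \<sigma>#}) =
      (\<Sum>s\<in>{1..card V}. \<Sum>\<sigma>\<in>order_surjs V E s. {#surj_word V d \<sigma>#})"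
    by (simp only:) (rule sum.UNION_disjoint,
        use finite_mono_surjs[OF V(1)] order_surjs_eq_mono_surjs[OF V(2)] in auto)
  also have "\<dots> = (\<Sum>s\<in>{1..card V}. \<Sum>\<sigma>\<in>order_surjs V E s. {#sigma_word V d s \<sigma>#})"
    by (intro sum.cong refl) (auto simp: surj_word_def order_surjs_eq_mono_surjs[OF V(2)])
  finally show ?thesis using False by (simp add: arb_def)
qed

lemma arb_empty: "arb ({}, E, d) = {#[]#}"
  by (simp add: arb_def)

lemma sigma_word_append:
  assumes "m \<le> s"
  shows "sigma_word V d s \<sigma> = sigma_word {v\<in>V. \<sigma> v \<le> m} d m \<sigma> @
           sigma_word {v\<in>V. m < \<sigma> v} d (s - m) (\<lambda>v. \<sigma> v - m)"
proof -
  have split: "[1..<s+1] = [1..<m+1] @ map (\<lambda>i. i + m) [1..<s-m+1]"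
    using upt_add_eq_append[of 1 "m+1" "s-m"] assms
    by (simp del: upt_Suc) (rule nth_equalityI, auto simp del: upt_Suc)
  show ?thesis
    unfolding sigma_word_def split map_append map_map
    by (intro arg_cong2[where f = "(@)"]) (auto intro!: map_cong arg_cong[where f = "dsum d"])
qed

lemma surj_word_lower_upper:
  assumes R: "admissible_rel R" and \<sigma>: "\<sigma> \<in> mono_surjs R V E" and m: "m \<le> card (\<sigma> ` V)"
  shows "surj_word V d \<sigma> = surj_word (lower_part \<sigma> m V) d (lower_map \<sigma> m V) @
           surj_word (V - lower_part \<sigma> m V) d (upper_map \<sigma> m V)"
proof -
  have "V - lower_part \<sigma> m V = {v\<in>V. m < \<sigma> v}" by (auto simp: lower_part_def)
  then show ?thesis
    unfolding surj_word_def lower_map_mono_surjs(2)[OF \<sigma> m] upper_map_mono_surjs(2)[OF R \<sigma> m]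
      sigma_word_append[OF m]
    by (auto simp: sigma_word_def lower_part_def lower_map_def upper_map_def
        intro!: map_cong arg_cong[where f = "dsum d"])
qed

lemma wt_surj_word:
  assumes "finite K" "K \<noteq> {}" "\<sigma> \<in> mono_surjs R K E"
  shows "wt (surj_word K d \<sigma>) = dsum d K"
proof -
  let ?m = "card (\<sigma> ` K)"
  have m1: "1 \<le> ?m" using assms one_le_card_image by blast
  have "{1..?m} = {1..<?m+1}" by auto
  then have "wt (surj_word K d \<sigma>) = dsum (\<lambda>j. dsum d {v\<in>K. \<sigma> v = j}) {1..?m}"
    by (simp add: surj_word_def sigma_word_def dsum_def)
  also have "\<dots> = dsum d (\<Union>j\<in>{1..?m}. {v\<in>K. \<sigma> v = j})"
    using assms m1 mono_surjs_hit[OF assms(3)]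
    by (intro dsum_UN_disjoint[symmetric]) (auto simp: disjoint_family_on_def)
  also have "(\<Union>j\<in>{1..?m}. {v\<in>K. \<sigma> v = j}) = K" using mono_surjs_range[OF assms(3)] by auto
  finally show ?thesis .
qed

lemma surj_word_first_level:
  assumes R: "admissible_rel R" and V: "finite V" "E \<subseteq> V \<times> V" "V \<noteq> {}"
    and \<sigma>: "\<sigma> \<in> mono_surjs R V E"
  shows "surj_word V d \<sigma> =
    dsum d (lower_part \<sigma> 1 V) # surj_word (V - lower_part \<sigma> 1 V) d (upper_map \<sigma> 1 V)"
proof -
  let ?K = "lower_part \<sigma> 1 V"
  have c1: "1 \<le> card (\<sigma> ` V)" using V one_le_card_image by blast
  note lower = lower_map_mono_surjs[OF \<sigma> c1]
  have K: "finite ?K" "?K \<noteq> {}"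
    using lower_part_nonempty_ideal[OF R V(2) \<sigma> order.refl c1] V(1)
    by (auto simp: nonempty_ideals_def lower_part_def)
  obtain a where "surj_word ?K d (lower_map \<sigma> 1 V) = [a]"
    using length_surj_word[of ?K d "lower_map \<sigma> 1 V"] lower(2) by (auto simp: length_Suc_conv)
  moreover have "wt (surj_word ?K d (lower_map \<sigma> 1 V)) = dsum d ?K"
    using wt_surj_word[OF K lower(1)] .
  ultimately have "surj_word ?K d (lower_map \<sigma> 1 V) = [dsum d ?K]" by simp
  then show ?thesis
    unfolding surj_word_lower_upper[OF R \<sigma> c1] by simp
qed

section \<open>Quasi-shuffles of linear combinations\<close>

lemma image_mset_sum_mset: "image_mset f (\<Sum>x\<in>#X. g x) = (\<Sum>x\<in>#X. image_mset f (g x))"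
  by (induction X) auto

lemma image_mset_sum: "image_mset f (\<Sum>x\<in>A. g x) = (\<Sum>x\<in>A. image_mset f (g x))"
  by (induction A rule: infinite_finite_induct) auto

lemma qsh_mm_add_left: "qsh_mm (X + Y) Z = qsh_mm X Z + qsh_mm Y Z"
  by (simp add: qsh_mm_def)

lemma qsh_mm_add_right: "qsh_mm X (Y + Z) = qsh_mm X Y + qsh_mm X Z"
  by (simp add: qsh_mm_def sum_mset.distrib)

lemma qsh_mm_empty_left [simp]: "qsh_mm {#} Z = {#}"
  and qsh_mm_empty_right [simp]: "qsh_mm Z {#} = {#}"
  by (simp_all add: qsh_mm_def)

lemma qsh_mm_sum_left: "qsh_mm (\<Sum>x\<in>A. f x) Z = (\<Sum>x\<in>A. qsh_mm (f x) Z)"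
  by (induction A rule: infinite_finite_induct) (auto simp: qsh_mm_add_left)

lemma qsh_mm_sum_right: "qsh_mm Z (\<Sum>x\<in>A. f x) = (\<Sum>x\<in>A. qsh_mm Z (f x))"
  by (induction A rule: infinite_finite_induct) (auto simp: qsh_mm_add_right)

lemma qsh_Nil_right [simp]: "qsh u [] = {#u#}"
  by (cases u) auto

lemma qsh_mm_Nil_left [simp]: "qsh_mm {#[]#} Z = Z"
  by (induction Z) (auto simp: qsh_mm_def)

lemma qsh_mm_Nil_right [simp]: "qsh_mm Z {#[]#} = Z"
  by (simp add: qsh_mm_def)

lemma qsh_mm_image_Cons:
  "qsh_mm (image_mset ((#) a) X) (image_mset ((#) b) Y) =
     image_mset ((#) a) (qsh_mm X (image_mset ((#) b) Y))
   + image_mset ((#) b) (qsh_mm (image_mset ((#) a) X) Y)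
   + image_mset ((#) (a + b)) (qsh_mm X Y)"
proof -
  have "qsh_mm (image_mset ((#) a) X) (image_mset ((#) b) Y) =
        (\<Sum>u\<in>#X. \<Sum>v\<in>#Y. qsh (a # u) (b # v))"
    by (simp add: qsh_mm_def multiset.map_comp comp_def)
  also have "\<dots> = (\<Sum>u\<in>#X. \<Sum>v\<in>#Y. image_mset ((#) a) (qsh u (b # v)))
      + (\<Sum>u\<in>#X. \<Sum>v\<in>#Y. image_mset ((#) b) (qsh (a # u) v))
      + (\<Sum>u\<in>#X. \<Sum>v\<in>#Y. image_mset ((#) (a + b)) (qsh u v))"
    by (simp add: sum_mset.distrib)
  also have "\<dots> = image_mset ((#) a) (qsh_mm X (image_mset ((#) b) Y))
   + image_mset ((#) b) (qsh_mm (image_mset ((#) a) X) Y)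
   + image_mset ((#) (a + b)) (qsh_mm X Y)"
    by (simp add: qsh_mm_def image_mset_sum_mset multiset.map_comp comp_def)
  finally show ?thesis .
qed

lemma qsh_mm_first_letters:
  fixes f :: "'i \<Rightarrow> 'a::ab_semigroup_add" and X :: "'i \<Rightarrow> 'a list multiset" and I :: "'i set"
    and g :: "'j \<Rightarrow> 'a" and Y :: "'j \<Rightarrow> 'a list multiset" and J :: "'j set"
  defines "X' \<equiv> (\<Sum>i\<in>I. image_mset ((#) (f i)) (X i))"
    and "Y' \<equiv> (\<Sum>j\<in>J. image_mset ((#) (g j)) (Y j))"
  shows "qsh_mm X' Y' =
      (\<Sum>i\<in>I. image_mset ((#) (f i)) (qsh_mm (X i) Y'))
    + (\<Sum>j\<in>J. image_mset ((#) (g j)) (qsh_mm X' (Y j)))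
    + (\<Sum>(i, j)\<in>I \<times> J. image_mset ((#) (f i + g j)) (qsh_mm (X i) (Y j)))"
proof -
  have "qsh_mm X' Y' = (\<Sum>i\<in>I. \<Sum>j\<in>J.
      qsh_mm (image_mset ((#) (f i)) (X i)) (image_mset ((#) (g j)) (Y j)))"
    unfolding X'_def Y'_def qsh_mm_sum_left qsh_mm_sum_right by (rule sum.swap)
  also have "\<dots> = (\<Sum>i\<in>I. \<Sum>j\<in>J. image_mset ((#) (f i)) (qsh_mm (X i) (image_mset ((#) (g j)) (Y j))))
      + (\<Sum>i\<in>I. \<Sum>j\<in>J. image_mset ((#) (g j)) (qsh_mm (image_mset ((#) (f i)) (X i)) (Y j)))
      + (\<Sum>i\<in>I. \<Sum>j\<in>J. image_mset ((#) (f i + g j)) (qsh_mm (X i) (Y j)))"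
    by (simp add: qsh_mm_image_Cons sum.distrib)
  also have "(\<Sum>i\<in>I. \<Sum>j\<in>J. image_mset ((#) (f i)) (qsh_mm (X i) (image_mset ((#) (g j)) (Y j))))
      = (\<Sum>i\<in>I. image_mset ((#) (f i)) (qsh_mm (X i) Y'))"
    by (simp add: Y'_def qsh_mm_sum_right image_mset_sum)
  also have "(\<Sum>i\<in>I. \<Sum>j\<in>J. image_mset ((#) (g j)) (qsh_mm (image_mset ((#) (f i)) (X i)) (Y j)))
      = (\<Sum>j\<in>J. image_mset ((#) (g j)) (qsh_mm X' (Y j)))"
    by (subst sum.swap) (simp add: X'_def qsh_mm_sum_left image_mset_sum)
  finally show ?thesis by (simp add: sum.cartesian_product)
qed

section \<open>Arborification of a disjoint union\<close>

definition source_sets :: "nat set \<Rightarrow> (nat \<times> nat) set \<Rightarrow> nat set set"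
  where "source_sets V E = {S. S \<subseteq> V \<and> S \<noteq> {} \<and> (\<forall>(u, v)\<in>E. v \<notin> S)}"

lemma source_sets_eq: "source_sets V E = {K \<in> nonempty_ideals V E. induced_edges E K = {}}"
  by (fastforce simp: source_sets_def nonempty_ideals_def order_ideal_def induced_edges_def)

lemma finite_source_sets: "finite V \<Longrightarrow> finite (source_sets V E)"
  by (rule finite_subset[of _ "Pow V"]) (auto simp: source_sets_def)

lemma arb_first_letter:
  assumes V: "finite V" "E \<subseteq> V \<times> V" "V \<noteq> {}"
  shows "arb (V, E, d) = (\<Sum>S\<in>source_sets V E.
    image_mset ((#) (dsum d S)) (arb (V - S, induced_edges E (V - S), d)))"
proof -
  let ?T = "SIGMA S:source_sets V E. mono_surjs (<) (V - S) (induced_edges E (V - S))"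
  let ?g = "\<lambda>(S, \<tau>). {#dsum d S # surj_word (V - S) d \<tau>#}"
  have bij: "bij_betw (\<lambda>\<sigma>. (lower_part \<sigma> 1 V, upper_map \<sigma> 1 V)) (mono_surjs (<) V E) ?T"
    using first_level_bij[OF admissible_less V] by (simp add: source_sets_eq)
  have "arb (V, E, d) = (\<Sum>\<sigma>\<in>mono_surjs (<) V E. ?g (lower_part \<sigma> 1 V, upper_map \<sigma> 1 V))"
    by (simp add: arb_eq_sum_mono_surjs[OF V(1,2)] surj_word_first_level[OF admissible_less V])
  also have "\<dots> = (\<Sum>S\<in>source_sets V E. \<Sum>\<tau>\<in>mono_surjs (<) (V - S) (induced_edges E (V - S)).
      {#dsum d S # surj_word (V - S) d \<tau>#})"
    unfolding sum.reindex_bij_betw[OF bij]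
    by (rule sum.Sigma[symmetric]) (auto simp: finite_source_sets finite_mono_surjs V(1))
  also have "\<dots> = (\<Sum>S\<in>source_sets V E.
      image_mset ((#) (dsum d S)) (arb (V - S, induced_edges E (V - S), d)))"
    using V(1) by (intro sum.cong refl)
      (simp add: arb_eq_sum_mono_surjs induced_edges_def image_mset_sum)
  finally show ?thesis .
qed

lemma source_sets_Un_disjoint:
  assumes AB: "A \<inter> B = {}" "E \<subseteq> A \<times> A \<union> B \<times> B"
  defines "SA \<equiv> source_sets A (induced_edges E A)" and "SB \<equiv> source_sets B (induced_edges E B)"
  shows "source_sets (A \<union> B) E = SA \<union> SB \<union> (\<lambda>(S, T). S \<union> T) ` (SA \<times> SB)"
proof (intro set_eqI iffI)
  fix S assume S: "S \<in> source_sets (A \<union> B) E"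
  then have split: "S = (S \<inter> A) \<union> (S \<inter> B)" by (auto simp: source_sets_def)
  have restrict: "S \<inter> A \<in> SA \<or> S \<inter> A = {}" "S \<inter> B \<in> SB \<or> S \<inter> B = {}"
    using S by (auto simp: SA_def SB_def source_sets_def induced_edges_def)
  consider "S \<inter> A = {}" | "S \<inter> B = {}" | "S \<inter> A \<noteq> {}" "S \<inter> B \<noteq> {}" by blast
  then show "S \<in> SA \<union> SB \<union> (\<lambda>(S, T). S \<union> T) ` (SA \<times> SB)"
  proof cases
    case 3
    then have "(S \<inter> A, S \<inter> B) \<in> SA \<times> SB" using restrict by auto
    then show ?thesis using split by (auto intro!: image_eqI[of _ _ "(S \<inter> A, S \<inter> B)"])
  qed (use restrict split S in \<open>auto simp: source_sets_def\<close>)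
next
  have into_A: "(u, v) \<in> induced_edges E A" if "(u, v) \<in> E" "v \<in> A" for u v
    using that AB by (auto simp: induced_edges_def)
  have into_B: "(u, v) \<in> induced_edges E B" if "(u, v) \<in> E" "v \<in> B" for u v
    using that AB by (auto simp: induced_edges_def)
  fix S assume "S \<in> SA \<union> SB \<union> (\<lambda>(S, T). S \<union> T) ` (SA \<times> SB)"
  then show "S \<in> source_sets (A \<union> B) E"
    by (auto simp: SA_def SB_def source_sets_def dest: into_A into_B)
qed

lemma sum_source_sets_Un_disjoint:
  assumes AB: "A \<inter> B = {}" "E \<subseteq> A \<times> A \<union> B \<times> B" and fin: "finite A" "finite B"
  defines "SA \<equiv> source_sets A (induced_edges E A)" and "SB \<equiv> source_sets B (induced_edges E B)"
  shows "(\<Sum>S\<in>source_sets (A \<union> B) E. f S) =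
    (\<Sum>S\<in>SA. f S) + (\<Sum>S\<in>SB. f S) + (\<Sum>(S, T)\<in>SA \<times> SB. f (S \<union> T))"
proof -
  have SA: "\<And>S. S \<in> SA \<Longrightarrow> S \<subseteq> A \<and> S \<noteq> {}" and SB: "\<And>S. S \<in> SB \<Longrightarrow> S \<subseteq> B \<and> S \<noteq> {}"
    by (auto simp: SA_def SB_def source_sets_def)
  have inj: "inj_on (\<lambda>(S, T). S \<union> T) (SA \<times> SB)"
  proof (rule inj_onI, clarify)
    fix S T S' T' assume "S \<in> SA" "T \<in> SB" "S' \<in> SA" "T' \<in> SB" "S \<union> T = S' \<union> T'"
    then show "S = S' \<and> T = T'" using SA SB AB(1) by blast
  qed
  have disj: "SA \<inter> SB = {}" "(SA \<union> SB) \<inter> (\<lambda>(S, T). S \<union> T) ` (SA \<times> SB) = {}"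
    using SA SB AB(1) by blast+
  have "finite SA" "finite SB" using fin by (simp_all add: SA_def SB_def finite_source_sets)
  moreover have "sum f ((\<lambda>(S, T). S \<union> T) ` (SA \<times> SB)) = (\<Sum>(S, T)\<in>SA \<times> SB. f (S \<union> T))"
    using sum.reindex[OF inj, of f] by (simp add: comp_def case_prod_unfold)
  ultimately show ?thesis
    unfolding source_sets_Un_disjoint[OF AB] SA_def[symmetric] SB_def[symmetric]
    using disj by (simp add: sum.union_disjoint)
qed

lemma arb_Un_first_letter:
  fixes d :: "nat \<Rightarrow> 'a::ab_semigroup_add"
  assumes fin: "finite A" "finite B" and AB: "A \<inter> B = {}" "E \<subseteq> A \<times> A \<union> B \<times> B"
    and nonempty: "A \<noteq> {}"
  defines "SA \<equiv> source_sets A (induced_edges E A)" and "SB \<equiv> source_sets B (induced_edges E B)"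
    and "rest \<equiv> \<lambda>S. arb ((A \<union> B) - S, induced_edges E ((A \<union> B) - S), d)"
  shows "arb (A \<union> B, E, d) = (\<Sum>S\<in>SA. image_mset ((#) (dsum d S)) (rest S))
    + (\<Sum>T\<in>SB. image_mset ((#) (dsum d T)) (rest T))
    + (\<Sum>(S, T)\<in>SA \<times> SB. image_mset ((#) (dsum d S + dsum d T)) (rest (S \<union> T)))"
proof -
  have "dsum d (S \<union> T) = dsum d S + dsum d T" if "S \<in> SA" "T \<in> SB" for S T
    using that fin AB(1) finite_subset
    by (intro dsum_Un_disjoint) (auto simp: SA_def SB_def source_sets_def)
  moreover have "arb (A \<union> B, E, d) = (\<Sum>S\<in>source_sets (A \<union> B) E. image_mset ((#) (dsum d S)) (rest S))"
    using fin AB nonempty unfolding rest_def by (intro arb_first_letter) auto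
  ultimately show ?thesis
    unfolding sum_source_sets_Un_disjoint[OF AB fin] SA_def[symmetric] SB_def[symmetric]
    by (auto intro!: sum.cong)
qed

text \<open>Peeling off the first letter on both sides reduces this to a smaller disjoint union.\<close>
lemma arb_Un_disjoint:
  assumes "finite A" "finite B" "A \<inter> B = {}" "E \<subseteq> A \<times> A \<union> B \<times> B"
  shows "arb (A \<union> B, E, d) = qsh_mm (arb (A, induced_edges E A, d)) (arb (B, induced_edges E B, d))"
  using assms
proof (induction "card (A \<union> B)" arbitrary: A B E rule: less_induct)
  case less
  note fin = less.prems(1,2) and AB = less.prems(3,4)
  show ?case
  proof (cases "A = {} \<or> B = {}")
    case True
    then show ?thesis using AB(2) by (auto simp: arb_empty induced_edges_def Int_absorb2)
  next
    case False
    then have nonempty: "A \<noteq> {}" "B \<noteq> {}" by auto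
    define XA where "XA S = arb (A - S, induced_edges E (A - S), d)" for S
    define XB where "XB T = arb (B - T, induced_edges E (B - T), d)" for T
    let ?SA = "source_sets A (induced_edges E A)" and ?SB = "source_sets B (induced_edges E B)"
    have IH: "arb ((A \<union> B) - (S \<union> T), induced_edges E ((A \<union> B) - (S \<union> T)), d) = qsh_mm (XA S) (XB T)"
      if "S \<subseteq> A" "T \<subseteq> B" "S \<union> T \<noteq> {}" for S T
    proof -
      have eq: "(A \<union> B) - (S \<union> T) = (A - S) \<union> (B - T)" using that AB(1) by auto
      have "card ((A - S) \<union> (B - T)) < card (A \<union> B)"
        using that fin AB(1) by (intro psubset_card_mono) blast+
      then show ?thesis
        unfolding eq XA_def XB_def using fin AB
        by (subst less.hyps) (auto simp: induced_edges_subset intro: arg_cong2[where f = qsh_mm],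
          auto simp: induced_edges_def)
    qed
    have SA: "\<And>S. S \<in> ?SA \<Longrightarrow> S \<subseteq> A \<and> S \<noteq> {}" and SB: "\<And>T. T \<in> ?SB \<Longrightarrow> T \<subseteq> B \<and> T \<noteq> {}"
      by (auto simp: source_sets_def)
    have EA: "induced_edges E A \<subseteq> A \<times> A" and EB: "induced_edges E B \<subseteq> B \<times> B"
      by (auto simp: induced_edges_def)
    have XA0: "XA {} = arb (A, induced_edges E A, d)" and XB0: "XB {} = arb (B, induced_edges E B, d)"
      by (simp_all add: XA_def XB_def)
    have arbA: "arb (A, induced_edges E A, d) = (\<Sum>S\<in>?SA. image_mset ((#) (dsum d S)) (XA S))"
      unfolding XA_def arb_first_letter[OF fin(1) EA nonempty(1)] by (simp add: induced_edges_subset)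
    have arbB: "arb (B, induced_edges E B, d) = (\<Sum>T\<in>?SB. image_mset ((#) (dsum d T)) (XB T))"
      unfolding XB_def arb_first_letter[OF fin(2) EB nonempty(2)] by (simp add: induced_edges_subset)
    have "arb (A \<union> B, E, d) = (\<Sum>S\<in>?SA. image_mset ((#) (dsum d S)) (qsh_mm (XA S) (XB {})))
        + (\<Sum>T\<in>?SB. image_mset ((#) (dsum d T)) (qsh_mm (XA {}) (XB T)))
        + (\<Sum>(S, T)\<in>?SA \<times> ?SB. image_mset ((#) (dsum d S + dsum d T)) (qsh_mm (XA S) (XB T)))"
      unfolding arb_Un_first_letter[OF fin AB nonempty(1)] using nonempty SA SB IH IH[of _ "{}"] IH[of "{}"]
      by (intro arg_cong2[where f = "(+)"] sum.cong refl) auto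
    also have "\<dots> = qsh_mm (arb (A, induced_edges E A, d)) (arb (B, induced_edges E B, d))"
      unfolding XA0 XB0 arbA arbB by (rule qsh_mm_first_letters[symmetric])
    finally show ?thesis .
  qed
qed

section \<open>The word coproduct cut after its first piece\<close>

text \<open>Product of the tensor product of the concatenation and the quasi-shuffle algebras.\<close>
definition conc_qsh :: "('a list \<times> 'b::ab_semigroup_add list) multiset \<Rightarrow>
    ('a list \<times> 'b list) multiset \<Rightarrow> ('a list \<times> 'b list) multiset"
  where "conc_qsh X Y = (\<Sum>p\<in>#X. \<Sum>q\<in>#Y. image_mset (Pair (fst p @ fst q)) (qsh (snd p) (snd q)))"

lemma conc_qsh_sum_left: "conc_qsh (\<Sum>x\<in>A. f x) Z = (\<Sum>x\<in>A. conc_qsh (f x) Z)"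
  by (induction A rule: infinite_finite_induct) (auto simp: conc_qsh_def)

lemma conc_qsh_sum_right: "conc_qsh Z (\<Sum>x\<in>A. f x) = (\<Sum>x\<in>A. conc_qsh Z (f x))"
  by (induction A rule: infinite_finite_induct) (auto simp: conc_qsh_def sum_mset.distrib)

lemma conc_qsh_singleton_image:
  "conc_qsh {#(l, p)#} (image_mset (Pair l') X) = image_mset (Pair (l @ l')) (qsh_mm {#p#} X)"
  by (simp add: conc_qsh_def qsh_mm_def image_mset_sum_mset multiset.map_comp comp_def)

lemma image_Pair_Cons_qsh_mm:
  "image_mset (Pair (a # l)) (qsh_mm X Y) = conc_qsh (image_mset (Pair [a]) X) (image_mset (Pair l) Y)"
  by (simp add: conc_qsh_def qsh_mm_def image_mset_sum_mset multiset.map_comp comp_def)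

definition word_decomps :: "'a list \<Rightarrow> 'a list list set"
  where "word_decomps w = {ps. concat ps = w \<and> (\<forall>p\<in>set ps. p \<noteq> [])}"

lemma word_decomps_Nil: "word_decomps [] = {[]}"
  by (auto simp: word_decomps_def)

lemma word_decomps_first_piece:
  assumes "w \<noteq> []"
  shows "word_decomps w =
    (\<lambda>(m, ps). take m w # ps) ` (SIGMA m:{1..length w}. word_decomps (drop m w))"
proof (intro set_eqI iffI)
  fix ps assume ps: "ps \<in> word_decomps w"
  then obtain p ps' where "ps = p # ps'" using assms by (cases ps) (auto simp: word_decomps_def)
  with ps show "ps \<in> (\<lambda>(m, ps). take m w # ps) ` (SIGMA m:{1..length w}. word_decomps (drop m w))"
    by (auto simp: word_decomps_def Suc_le_eq intro!: image_eqI[of _ _ "(length p, ps')"])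
qed (use assms in \<open>auto simp: word_decomps_def\<close>)

lemma inj_on_first_piece:
  "inj_on (\<lambda>(m, ps). take m w # ps) (SIGMA m:{1..length w}. word_decomps (drop m w))"
proof (rule inj_onI, clarsimp)
  fix m m' :: nat assume "m \<le> length w" "m' \<le> length w" "take m w = take m' w"
  then show "m = m'" by (metis length_take min.absorb2)
qed

lemma finite_word_decomps: "finite (word_decomps w)"
proof (induction "length w" arbitrary: w rule: less_induct)
  case less
  show ?case
  proof (cases "w = []")
    case False
    have "finite (SIGMA m:{1..length w}. word_decomps (drop m w))"
      using less False by (intro finite_SigmaI) auto
    then show ?thesis unfolding word_decomps_first_piece[OF False] by simp
  qed (simp add: word_decomps_Nil)
qed

lemma coprod_word_eq_sum_decomps:
  "coprod_word w = (\<Sum>ps\<in>word_decomps w. image_mset (Pair (map wt ps)) (qsh_list ps))"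
  by (simp add: coprod_word_def word_decomps_def)

lemma coprod_word_Nil: "coprod_word [] = {#([], [])#}"
  by (simp add: coprod_word_eq_sum_decomps word_decomps_Nil qsh_list_def)

lemma coprod_word_first_piece:
  assumes "w \<noteq> []"
  shows "coprod_word w =
    (\<Sum>m\<in>{1..length w}. conc_qsh {#([wt (take m w)], take m w)#} (coprod_word (drop m w)))"
proof -
  have "coprod_word w = (\<Sum>(m, ps)\<in>(SIGMA m:{1..length w}. word_decomps (drop m w)).
      image_mset (Pair (map wt (take m w # ps))) (qsh_list (take m w # ps)))"
    unfolding coprod_word_eq_sum_decomps word_decomps_first_piece[OF assms]
    by (subst sum.reindex[OF inj_on_first_piece]) (simp add: case_prod_beta)
  also have "\<dots> = (\<Sum>m\<in>{1..length w}. \<Sum>ps\<in>word_decomps (drop m w).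
      image_mset (Pair (map wt (take m w # ps))) (qsh_list (take m w # ps)))"
    by (subst sum.Sigma) (auto simp: finite_word_decomps)
  also have "\<dots> = (\<Sum>m\<in>{1..length w}. conc_qsh {#([wt (take m w)], take m w)#} (coprod_word (drop m w)))"
    by (simp add: coprod_word_eq_sum_decomps conc_qsh_sum_right conc_qsh_singleton_image qsh_list_def)
  finally show ?thesis .
qed

section \<open>A recursion shared by both sides\<close>

definition ideal_factor :: "nat set \<Rightarrow> (nat \<times> nat) set \<Rightarrow> (nat \<Rightarrow> 'a::ab_semigroup_add) \<Rightarrow>
    ('a list \<times> 'a list) multiset"
  where "ideal_factor K E d = image_mset (Pair [dsum d K]) (arb (K, induced_edges E K, d))"

lemma eq_by_ideal_recursion:
  assumes F: "\<And>V E. finite V \<Longrightarrow> E \<subseteq> V \<times> V \<Longrightarrow> V \<noteq> {} \<Longrightarrow>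
      F V E = (\<Sum>K\<in>nonempty_ideals V E. H K E (F (V - K) (induced_edges E (V - K))))"
    and G: "\<And>V E. finite V \<Longrightarrow> E \<subseteq> V \<times> V \<Longrightarrow> V \<noteq> {} \<Longrightarrow>
      G V E = (\<Sum>K\<in>nonempty_ideals V E. H K E (G (V - K) (induced_edges E (V - K))))"
    and empty: "F {} {} = G {} {}"
    and V: "finite V" "E \<subseteq> V \<times> V"
  shows "F V E = G V E"
  using V
proof (induction "card V" arbitrary: V E rule: less_induct)
  case less
  show ?case
  proof (cases "V = {}")
    case True
    then show ?thesis using less.prems empty by simp
  next
    case False
    have "F (V - K) (induced_edges E (V - K)) = G (V - K) (induced_edges E (V - K))"
      if "K \<in> nonempty_ideals V E" for K
    proof (rule less.hyps)
      show "card (V - K) < card V"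
        using that less.prems by (intro psubset_card_mono) (auto simp: nonempty_ideals_def order_ideal_def)
    qed (use less.prems in \<open>auto simp: induced_edges_def\<close>)
    then show ?thesis using F[OF less.prems False] G[OF less.prems False] by simp
  qed
qed

lemma coprod_words_sum: "coprod_words (\<Sum>x\<in>A. f x) = (\<Sum>x\<in>A. coprod_words (f x))"
  using sum_comp_morphism[of coprod_words f A] by (simp add: coprod_words_def comp_def)

lemma coprod_words_arb_eq_sum:
  assumes "finite V" "E \<subseteq> V \<times> V"
  shows "coprod_words (arb (V, E, d)) = (\<Sum>\<sigma>\<in>mono_surjs (<) V E. coprod_word (surj_word V d \<sigma>))"
  unfolding arb_eq_sum_mono_surjs[OF assms] coprod_words_sum by (simp add: coprod_words_def)

text \<open>Cutting the word of \<open>\<sigma>\<close> after its \<open>m\<close>-th letter is cutting \<open>\<sigma>\<close> at level \<open>m\<close>.\<close>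
lemma coprod_word_surj_word:
  assumes R: "admissible_rel R" and V: "finite V" "E \<subseteq> V \<times> V" "V \<noteq> {}"
    and \<sigma>: "\<sigma> \<in> mono_surjs R V E"
  shows "coprod_word (surj_word V d \<sigma>) = (\<Sum>m\<in>{1..card (\<sigma> ` V)}.
    conc_qsh {#([dsum d (lower_part \<sigma> m V)], surj_word (lower_part \<sigma> m V) d (lower_map \<sigma> m V))#}
      (coprod_word (surj_word (V - lower_part \<sigma> m V) d (upper_map \<sigma> m V))))"
proof -
  have "surj_word V d \<sigma> \<noteq> []"
    using V one_le_card_image[of V \<sigma>] by (auto simp: length_surj_word simp flip: length_0_conv)
  then have "coprod_word (surj_word V d \<sigma>) = (\<Sum>m\<in>{1..card (\<sigma> ` V)}.
      conc_qsh {#([wt (take m (surj_word V d \<sigma>))], take m (surj_word V d \<sigma>))#}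
        (coprod_word (drop m (surj_word V d \<sigma>))))"
    by (simp add: coprod_word_first_piece length_surj_word)
  also have "\<dots> = (\<Sum>m\<in>{1..card (\<sigma> ` V)}.
    conc_qsh {#([dsum d (lower_part \<sigma> m V)], surj_word (lower_part \<sigma> m V) d (lower_map \<sigma> m V))#}
      (coprod_word (surj_word (V - lower_part \<sigma> m V) d (upper_map \<sigma> m V))))"
  proof (intro sum.cong refl)
    fix m assume "m \<in> {1..card (\<sigma> ` V)}"
    then have m: "1 \<le> m" "m \<le> card (\<sigma> ` V)" by auto
    let ?K = "lower_part \<sigma> m V"
    note lower = lower_map_mono_surjs[OF \<sigma> m(2)]
    have K: "finite ?K" "?K \<noteq> {}"
      using V(1) lower_part_nonempty_ideal[OF R V(2) \<sigma> m]
      by (auto simp: lower_part_def nonempty_ideals_def)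
    have "length (surj_word ?K d (lower_map \<sigma> m V)) = m"
      using lower(2) by (simp add: length_surj_word)
    then show "conc_qsh {#([wt (take m (surj_word V d \<sigma>))], take m (surj_word V d \<sigma>))#}
        (coprod_word (drop m (surj_word V d \<sigma>))) =
      conc_qsh {#([dsum d ?K], surj_word ?K d (lower_map \<sigma> m V))#}
        (coprod_word (surj_word (V - ?K) d (upper_map \<sigma> m V)))"
      unfolding surj_word_lower_upper[OF R \<sigma> m(2)]
      using wt_surj_word[OF K lower(1), where d = d] by simp
  qed
  finally show ?thesis .
qed

lemma coprod_words_arb_rec:
  assumes V: "finite V" "E \<subseteq> V \<times> V" "V \<noteq> {}"
  shows "coprod_words (arb (V, E, d)) = (\<Sum>K\<in>nonempty_ideals V E.
    conc_qsh (ideal_factor K E d) (coprod_words (arb (V - K, induced_edges E (V - K), d))))"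
proof -
  let ?h = "\<lambda>(K, \<sigma>1, \<sigma>2). conc_qsh {#([dsum d K], surj_word K d \<sigma>1)#}
    (coprod_word (surj_word (V - K) d \<sigma>2))"
  have fin_ideals: "\<And>K. K \<in> nonempty_ideals V E \<Longrightarrow> finite K"
    using V(1) by (auto simp: nonempty_ideals_def order_ideal_def intro: finite_subset)
  have "coprod_words (arb (V, E, d)) = (\<Sum>\<sigma>\<in>mono_surjs (<) V E. \<Sum>m\<in>{1..card (\<sigma> ` V)}.
      ?h (lower_part \<sigma> m V, lower_map \<sigma> m V, upper_map \<sigma> m V))"
    unfolding coprod_words_arb_eq_sum[OF V(1,2)]
    by (intro sum.cong refl) (simp add: coprod_word_surj_word[OF admissible_less V])
  also have "\<dots> = (\<Sum>(\<sigma>, m)\<in>(SIGMA \<sigma>:mono_surjs (<) V E. {1..card (\<sigma> ` V)}).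
      ?h (lower_part \<sigma> m V, lower_map \<sigma> m V, upper_map \<sigma> m V))"
    by (rule sum.Sigma) (auto simp: finite_mono_surjs V(1))
  also have "\<dots> = (\<Sum>(K, \<sigma>1, \<sigma>2)\<in>(SIGMA K:nonempty_ideals V E.
      mono_surjs (<) K (induced_edges E K) \<times> mono_surjs (<) (V - K) (induced_edges E (V - K))).
        ?h (K, \<sigma>1, \<sigma>2))"
    using sum.reindex_bij_betw[OF lower_upper_bij[OF admissible_less V(1,2)], of ?h]
    by (simp add: case_prod_unfold)
  also have "\<dots> = (\<Sum>K\<in>nonempty_ideals V E. \<Sum>\<sigma>1\<in>mono_surjs (<) K (induced_edges E K).
      \<Sum>\<sigma>2\<in>mono_surjs (<) (V - K) (induced_edges E (V - K)). ?h (K, \<sigma>1, \<sigma>2))"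
    using fin_ideals V(1)
    by (subst sum.Sigma[symmetric]) (auto simp: finite_nonempty_ideals finite_mono_surjs
        sum.cartesian_product' case_prod_unfold intro!: sum.cong)
  also have "\<dots> = (\<Sum>K\<in>nonempty_ideals V E.
      conc_qsh (ideal_factor K E d) (coprod_words (arb (V - K, induced_edges E (V - K), d))))"
  proof (intro sum.cong refl)
    fix K assume "K \<in> nonempty_ideals V E"
    then have "arb (K, induced_edges E K, d) =
        (\<Sum>\<sigma>1\<in>mono_surjs (<) K (induced_edges E K). {#surj_word K d \<sigma>1#})"
      using fin_ideals by (intro arb_eq_sum_mono_surjs) (auto simp: induced_edges_def)
    moreover have "coprod_words (arb (V - K, induced_edges E (V - K), d)) =
        (\<Sum>\<sigma>2\<in>mono_surjs (<) (V - K) (induced_edges E (V - K)). coprod_word (surj_word (V - K) d \<sigma>2))"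
      using V(1) by (intro coprod_words_arb_eq_sum) (auto simp: induced_edges_def)
    ultimately show "(\<Sum>\<sigma>1\<in>mono_surjs (<) K (induced_edges E K).
        \<Sum>\<sigma>2\<in>mono_surjs (<) (V - K) (induced_edges E (V - K)). ?h (K, \<sigma>1, \<sigma>2)) =
      conc_qsh (ideal_factor K E d) (coprod_words (arb (V - K, induced_edges E (V - K), d)))"
      by (simp add: ideal_factor_def image_mset_sum conc_qsh_sum_left conc_qsh_sum_right)
        (rule sum.swap)
  qed
  finally show ?thesis .
qed

definition level_edges :: "(nat \<Rightarrow> nat) \<Rightarrow> (nat \<times> nat) set \<Rightarrow> (nat \<times> nat) set"
  where "level_edges \<kappa> E = {(u, v) \<in> E. \<kappa> u = \<kappa> v}"

text \<open>
  The right-hand side, before covering subforests are identified with weakly monotone surjections.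
\<close>
definition level_expansion :: "nat set \<Rightarrow> (nat \<times> nat) set \<Rightarrow> (nat \<Rightarrow> 'a::ab_semigroup_add) \<Rightarrow>
    ('a list \<times> 'a list) multiset"
  where "level_expansion V E d =
    (\<Sum>\<kappa>\<in>mono_surjs (\<le>) V E. image_mset (Pair (surj_word V d \<kappa>)) (arb (V, level_edges \<kappa> E, d)))"

text \<open>No edge of a level set leaves the first level, so the arborification splits as a quasi-shuffle.\<close>
lemma level_summand_first_level:
  assumes V: "finite V" "E \<subseteq> V \<times> V" "V \<noteq> {}" and \<kappa>: "\<kappa> \<in> mono_surjs (\<le>) V E"
  defines "K \<equiv> lower_part \<kappa> 1 V" and "\<kappa>' \<equiv> upper_map \<kappa> 1 V"
  shows "image_mset (Pair (surj_word V d \<kappa>)) (arb (V, level_edges \<kappa> E, d)) =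
    conc_qsh (ideal_factor K E d) (image_mset (Pair (surj_word (V - K) d \<kappa>'))
      (arb (V - K, level_edges \<kappa>' (induced_edges E (V - K)), d)))"
proof -
  have KV: "K \<subseteq> V" and finK: "finite K" using V(1) by (auto simp: K_def lower_part_def)
  have level_one: "\<kappa> v = 1" if "v \<in> K" for v
    using that mono_surjs_range[OF \<kappa>, of v] by (auto simp: K_def lower_part_def)
  have "level_edges \<kappa> E \<subseteq> K \<times> K \<union> (V - K) \<times> (V - K)"
    using V(2) by (auto simp: level_edges_def K_def lower_part_def)
  then have "arb (K \<union> (V - K), level_edges \<kappa> E, d) = qsh_mm
      (arb (K, induced_edges (level_edges \<kappa> E) K, d))
      (arb (V - K, induced_edges (level_edges \<kappa> E) (V - K), d))"
    using V(1) finK by (intro arb_Un_disjoint) auto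
  moreover have "induced_edges (level_edges \<kappa> E) K = induced_edges E K"
    using level_one by (auto simp: induced_edges_def level_edges_def)
  moreover have "induced_edges (level_edges \<kappa> E) (V - K) = level_edges \<kappa>' (induced_edges E (V - K))"
    by (auto simp: induced_edges_def level_edges_def K_def \<kappa>'_def lower_part_def upper_map_def)
  moreover have "K \<union> (V - K) = V" using KV by blast
  ultimately show ?thesis
    unfolding surj_word_first_level[OF admissible_le V \<kappa>] K_def[symmetric] \<kappa>'_def[symmetric]
    by (simp add: image_Pair_Cons_qsh_mm ideal_factor_def)
qed

lemma level_expansion_rec:
  assumes V: "finite V" "E \<subseteq> V \<times> V" "V \<noteq> {}"
  shows "level_expansion V E d = (\<Sum>K\<in>nonempty_ideals V E.
    conc_qsh (ideal_factor K E d) (level_expansion (V - K) (induced_edges E (V - K)) d))"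
proof -
  let ?T = "SIGMA K:nonempty_ideals V E. mono_surjs (\<le>) (V - K) (induced_edges E (V - K))"
  let ?g = "\<lambda>(K, \<kappa>'). conc_qsh (ideal_factor K E d) (image_mset (Pair (surj_word (V - K) d \<kappa>'))
      (arb (V - K, level_edges \<kappa>' (induced_edges E (V - K)), d)))"
  have bij: "bij_betw (\<lambda>\<kappa>. (lower_part \<kappa> 1 V, upper_map \<kappa> 1 V)) (mono_surjs (\<le>) V E) ?T"
    using first_level_bij[OF admissible_le V] by simp
  have "level_expansion V E d = (\<Sum>\<kappa>\<in>mono_surjs (\<le>) V E. ?g (lower_part \<kappa> 1 V, upper_map \<kappa> 1 V))"
    unfolding level_expansion_def by (simp add: level_summand_first_level[OF V])
  also have "\<dots> = (\<Sum>K\<in>nonempty_ideals V E. \<Sum>\<kappa>'\<in>mono_surjs (\<le>) (V - K) (induced_edges E (V - K)).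
      conc_qsh (ideal_factor K E d) (image_mset (Pair (surj_word (V - K) d \<kappa>'))
        (arb (V - K, level_edges \<kappa>' (induced_edges E (V - K)), d))))"
    unfolding sum.reindex_bij_betw[OF bij]
    by (rule sum.Sigma[symmetric]) (auto simp: finite_nonempty_ideals finite_mono_surjs V(1))
  also have "\<dots> = (\<Sum>K\<in>nonempty_ideals V E.
      conc_qsh (ideal_factor K E d) (level_expansion (V - K) (induced_edges E (V - K)) d))"
    by (simp add: level_expansion_def conc_qsh_sum_right)
  finally show ?thesis .
qed

lemma coprod_words_arb_eq_level_expansion:
  assumes "finite V" "E \<subseteq> V \<times> V"
  shows "coprod_words (arb (V, E, d)) = level_expansion V E d"
proof (rule eq_by_ideal_recursion[where H = "\<lambda>K E. conc_qsh (ideal_factor K E d)"])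
  show "coprod_words (arb ({}, {}, d)) = level_expansion {} {} d"
    by (simp add: arb_empty coprod_words_def coprod_word_Nil level_expansion_def mono_surjs_empty
        surj_word_def sigma_word_def)
qed (use assms in \<open>simp_all add: coprod_words_arb_rec level_expansion_rec\<close>)

section \<open>Covering subforests as weakly monotone surjections\<close>

definition block_of :: "nat set set \<Rightarrow> nat \<Rightarrow> nat set"
  where "block_of P v = \<Union>{B\<in>P. v \<in> B}"

definition quotient_edges :: "(nat \<times> nat) set \<Rightarrow> nat set set \<Rightarrow> (nat \<times> nat) set"
  where "quotient_edges E P =
    {(Min B, Min B') | B B'. B \<in> P \<and> B' \<in> P \<and> B \<noteq> B' \<and> (\<exists>u\<in>B. \<exists>v\<in>B'. (u, v) \<in> E)}"

definition quotient_dec :: "nat set \<Rightarrow> (nat \<Rightarrow> 'a::ab_semigroup_add) \<Rightarrow> nat set set \<Rightarrow> nat \<Rightarrow> 'a"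
  where "quotient_dec V d P = (\<lambda>x. dsum d {v\<in>V. \<exists>B\<in>P. v \<in> B \<and> Min B = x})"

definition block_edges :: "(nat \<times> nat) set \<Rightarrow> nat set set \<Rightarrow> (nat \<times> nat) set"
  where "block_edges E P = E \<inter> (\<Union>B\<in>P. B \<times> B)"

lemma contract_eq: "contract (V, E, d) P = (Min ` P, quotient_edges E P, quotient_dec V d P)"
  by (simp add: contract_def quotient_edges_def quotient_dec_def)

lemma subforest_eq: "subforest (V, E, d) P = (V, block_edges E P, d)"
  by (simp add: subforest_def block_edges_def)

definition lift_surj :: "nat set set \<Rightarrow> (nat \<Rightarrow> nat) \<Rightarrow> nat set \<Rightarrow> nat \<Rightarrow> nat"
  where "lift_surj P \<tau> V = (\<lambda>v. if v \<in> V then \<tau> (Min (block_of P v)) else 0)"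

text \<open>Conversely, the blocks are the connected components of the level sets of \<open>\<kappa>\<close>.\<close>
definition level_conn :: "nat set \<Rightarrow> (nat \<times> nat) set \<Rightarrow> (nat \<Rightarrow> nat) \<Rightarrow> (nat \<times> nat) set"
  where "level_conn V E \<kappa> =
    {(u, v). u \<in> V \<and> v \<in> V \<and> (u, v) \<in> (level_edges \<kappa> E \<union> (level_edges \<kappa> E)\<inverse>)\<^sup>*}"

definition restrict_to_minima :: "nat set set \<Rightarrow> (nat \<Rightarrow> nat) \<Rightarrow> nat \<Rightarrow> nat"
  where "restrict_to_minima P \<kappa> = (\<lambda>x. if x \<in> Min ` P then \<kappa> x else 0)"

locale finite_partition =
  fixes V :: "nat set" and P :: "nat set set"
  assumes finite: "finite V" and partition: "partition_on V P"
begin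

lemma block: "B \<in> P \<Longrightarrow> finite B \<and> B \<noteq> {} \<and> B \<subseteq> V \<and> Min B \<in> B"
proof -
  assume "B \<in> P"
  then have "B \<subseteq> V" "B \<noteq> {}" using partition by (auto simp: partition_on_def)
  moreover from this have "finite B" using finite finite_subset by blast
  ultimately show ?thesis using Min_in by blast
qed

lemma block_exists: "v \<in> V \<Longrightarrow> \<exists>B\<in>P. v \<in> B"
  using partition by (auto simp: partition_on_def)

lemma block_unique: "B \<in> P \<Longrightarrow> B' \<in> P \<Longrightarrow> v \<in> B \<Longrightarrow> v \<in> B' \<Longrightarrow> B = B'"
  using partition by (auto simp: partition_on_def disjoint_def)

lemma block_of_eq: "B \<in> P \<Longrightarrow> v \<in> B \<Longrightarrow> block_of P v = B"
  using block_unique by (auto simp: block_of_def)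

lemma block_of_in: "v \<in> V \<Longrightarrow> block_of P v \<in> P \<and> v \<in> block_of P v"
  using block_exists block_of_eq by metis

lemma Min_block_inj: "B \<in> P \<Longrightarrow> B' \<in> P \<Longrightarrow> Min B = Min B' \<Longrightarrow> B = B'"
  using block block_unique by metis

lemma finite_blocks: "finite P"
  using finite partition finite_elements by blast

end

context
  fixes V :: "nat set" and E :: "(nat \<times> nat) set" and P :: "nat set set" and \<tau> :: "nat \<Rightarrow> nat"
  assumes cov: "covering V E P" and fin: "finite V" and EV: "E \<subseteq> V \<times> V"
    and \<tau>: "\<tau> \<in> mono_surjs (<) (Min ` P) (quotient_edges E P)"
begin

interpretation finite_partition V P
  using cov fin by unfold_locales (auto simp: covering_def)

lemma lift_surj_block: "B \<in> P \<Longrightarrow> v \<in> B \<Longrightarrow> lift_surj P \<tau> V v = \<tau> (Min B)"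
  using block_of_eq block by (auto simp: lift_surj_def)

lemma lift_surj_strict:
  assumes "(u, v) \<in> E" "B \<in> P" "B' \<in> P" "u \<in> B" "v \<in> B'" "B \<noteq> B'"
  shows "lift_surj P \<tau> V u < lift_surj P \<tau> V v"
proof -
  have "(Min B, Min B') \<in> quotient_edges E P" using assms by (auto simp: quotient_edges_def)
  then show ?thesis using mono_surjsD(3)[OF \<tau>] lift_surj_block assms by simp
qed

lemma image_lift_surj: "lift_surj P \<tau> V ` V = \<tau> ` (Min ` P)"
proof
  show "lift_surj P \<tau> V ` V \<subseteq> \<tau> ` (Min ` P)" using block_of_in by (auto simp: lift_surj_def)
  show "\<tau> ` (Min ` P) \<subseteq> lift_surj P \<tau> V ` V"
  proof
    fix y assume "y \<in> \<tau> ` (Min ` P)"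
    then obtain B where "B \<in> P" "y = \<tau> (Min B)" by auto
    then have "Min B \<in> V" "lift_surj P \<tau> V (Min B) = y" using block lift_surj_block by auto
    then show "y \<in> lift_surj P \<tau> V ` V" by force
  qed
qed

lemma lift_surj_mono_surjs: "lift_surj P \<tau> V \<in> mono_surjs (\<le>) V E"
proof (rule mono_surjsI(1))
  show "\<And>v. v \<notin> V \<Longrightarrow> lift_surj P \<tau> V v = 0" by (simp add: lift_surj_def)
  show "lift_surj P \<tau> V ` V = {1..card (\<tau> ` Min ` P)}"
    using image_lift_surj mono_surjsD(2)[OF \<tau>] by simp
  fix u v assume uv: "(u, v) \<in> E"
  then obtain B B' where "B \<in> P" "B' \<in> P" "u \<in> B" "v \<in> B'" using EV block_exists by blast
  then show "lift_surj P \<tau> V u \<le> lift_surj P \<tau> V v"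
    using lift_surj_strict[OF uv] lift_surj_block by (cases "B = B'") force+
qed

lemma level_edges_lift_surj: "level_edges (lift_surj P \<tau> V) E = block_edges E P"
proof
  show "level_edges (lift_surj P \<tau> V) E \<subseteq> block_edges E P"
  proof clarify
    fix u v assume "(u, v) \<in> level_edges (lift_surj P \<tau> V) E"
    then have uv: "(u, v) \<in> E" "lift_surj P \<tau> V u = lift_surj P \<tau> V v" by (auto simp: level_edges_def)
    then obtain B B' where B: "B \<in> P" "B' \<in> P" "u \<in> B" "v \<in> B'" using EV block_exists by blast
    then have "B = B'" using lift_surj_strict[OF uv(1)] uv(2) by (metis less_irrefl)
    then show "(u, v) \<in> block_edges E P" using B uv by (auto simp: block_edges_def)
  qed
  show "block_edges E P \<subseteq> level_edges (lift_surj P \<tau> V) E"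
    using lift_surj_block by (auto simp: block_edges_def level_edges_def)
qed

lemma block_edges_path_stays:
  "(u, v) \<in> (block_edges E P \<union> (block_edges E P)\<inverse>)\<^sup>* \<Longrightarrow> B \<in> P \<Longrightarrow> u \<in> B \<Longrightarrow> v \<in> B"
proof (induction rule: rtrancl_induct)
  case (step y z)
  then obtain B' where "B' \<in> P" "y \<in> B'" "z \<in> B'" by (auto simp: block_edges_def)
  then show ?case using block_unique[of B B' y] step by auto
qed simp

lemma quotient_level_conn_lift_surj: "V // level_conn V E (lift_surj P \<tau> V) = P"
proof -
  have "level_conn V E (lift_surj P \<tau> V) = {(x, y). \<exists>B\<in>P. x \<in> B \<and> y \<in> B}"
  proof safe
    fix u v assume "(u, v) \<in> level_conn V E (lift_surj P \<tau> V)"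
    then have uv: "u \<in> V" "(u, v) \<in> (block_edges E P \<union> (block_edges E P)\<inverse>)\<^sup>*"
      by (auto simp: level_conn_def level_edges_lift_surj)
    then show "\<exists>B\<in>P. u \<in> B \<and> v \<in> B" using block_of_in[OF uv(1)] block_edges_path_stays by blast
  next
    fix x y B assume B: "B \<in> P" "x \<in> B" "y \<in> B"
    then have "(x, y) \<in> ((E \<inter> B \<times> B) \<union> (E \<inter> B \<times> B)\<inverse>)\<^sup>*" using cov by (auto simp: covering_def)
    moreover have "(E \<inter> B \<times> B) \<union> (E \<inter> B \<times> B)\<inverse> \<subseteq> block_edges E P \<union> (block_edges E P)\<inverse>"
      using B by (auto simp: block_edges_def)
    ultimately have "(x, y) \<in> (block_edges E P \<union> (block_edges E P)\<inverse>)\<^sup>*" using rtrancl_mono by blast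
    then show "(x, y) \<in> level_conn V E (lift_surj P \<tau> V)"
      using B block by (auto simp: level_conn_def level_edges_lift_surj)
  qed
  then show ?thesis using partition_on_eq_quotient[OF partition] by simp
qed

lemma restrict_lift_surj: "restrict_to_minima P (lift_surj P \<tau> V) = \<tau>"
proof
  fix x show "restrict_to_minima P (lift_surj P \<tau> V) x = \<tau> x"
    using lift_surj_block block mono_surjsD(1)[OF \<tau>, of x] by (auto simp: restrict_to_minima_def)
qed

text \<open>The letters of both words are sums over the same vertices, grouped by blocks.\<close>
lemma surj_word_lift_surj: "surj_word (Min ` P) (quotient_dec V d P) \<tau> = surj_word V d (lift_surj P \<tau> V)"
proof -
  let ?s = "card (\<tau> ` Min ` P)"
  let ?A = "\<lambda>x. {v\<in>V. \<exists>B\<in>P. v \<in> B \<and> Min B = x}"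
  have A_Min: "?A (Min B) = B" if "B \<in> P" for B
    using that Min_block_inj block by blast
  have "dsum (quotient_dec V d P) {x \<in> Min ` P. \<tau> x = j} = dsum d {v\<in>V. lift_surj P \<tau> V v = j}"
    if j: "j \<in> {1..?s}" for j
  proof -
    let ?I = "{x \<in> Min ` P. \<tau> x = j}"
    have "j \<in> \<tau> ` Min ` P" using j mono_surjsD(2)[OF \<tau>] by metis
    then have "?I \<noteq> {}" by auto
    then have "dsum d (\<Union>x\<in>?I. ?A x) = dsum (quotient_dec V d P) ?I"
      unfolding quotient_dec_def using finite_blocks block A_Min
      by (intro dsum_UN_disjoint) (auto simp: disjoint_family_on_def dest: block_unique)
    moreover have "(\<Union>x\<in>?I. ?A x) = {v\<in>V. lift_surj P \<tau> V v = j}"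
    proof
      show "(\<Union>x\<in>?I. ?A x) \<subseteq> {v\<in>V. lift_surj P \<tau> V v = j}" using lift_surj_block by auto
      show "{v\<in>V. lift_surj P \<tau> V v = j} \<subseteq> (\<Union>x\<in>?I. ?A x)"
      proof
        fix v assume v: "v \<in> {v\<in>V. lift_surj P \<tau> V v = j}"
        then have "block_of P v \<in> P" "v \<in> block_of P v" using block_of_in by auto
        moreover from this have "\<tau> (Min (block_of P v)) = j" using v lift_surj_block by auto
        ultimately show "v \<in> (\<Union>x\<in>?I. ?A x)" using v by blast
      qed
    qed
    ultimately show ?thesis by simp
  qed
  then show ?thesis
    unfolding surj_word_def sigma_word_def image_lift_surj by (intro map_cong refl) auto
qed

end

context
  fixes V :: "nat set" and E :: "(nat \<times> nat) set" and \<kappa> :: "nat \<Rightarrow> nat"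
  assumes fin: "finite V" and EV: "E \<subseteq> V \<times> V" and \<kappa>: "\<kappa> \<in> mono_surjs (\<le>) V E"
begin

lemma equiv_level_conn: "equiv V (level_conn V E \<kappa>)"
proof (rule equivI)
  have "sym ((level_edges \<kappa> E \<union> (level_edges \<kappa> E)\<inverse>)\<^sup>*)" by (intro sym_rtrancl sym_Un_converse)
  then show "sym (level_conn V E \<kappa>)" by (auto simp: level_conn_def sym_def)
qed (auto simp: level_conn_def refl_on_def trans_def)

lemma level_conn_imp_eq: "(u, v) \<in> level_conn V E \<kappa> \<Longrightarrow> \<kappa> u = \<kappa> v"
proof -
  assume "(u, v) \<in> level_conn V E \<kappa>"
  then have "(u, v) \<in> (level_edges \<kappa> E \<union> (level_edges \<kappa> E)\<inverse>)\<^sup>*" by (simp add: level_conn_def)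
  then show "\<kappa> u = \<kappa> v" by (induction rule: rtrancl_induct) (auto simp: level_edges_def)
qed

interpretation finite_partition V "V // level_conn V E \<kappa>"
  using fin partition_on_quotient[OF equiv_level_conn] by unfold_locales

lemma covering_level_conn: "covering V E (V // level_conn V E \<kappa>)"
proof -
  let ?R = "level_edges \<kappa> E \<union> (level_edges \<kappa> E)\<inverse>"
  have "(y, z) \<in> ((E \<inter> B \<times> B) \<union> (E \<inter> B \<times> B)\<inverse>)\<^sup>*"
    if B: "B \<in> V // level_conn V E \<kappa>" and y: "y \<in> B" and z: "z \<in> B" for B y z
  proof -
    have yV: "y \<in> V" using block[OF B] y by auto
    have "w \<in> B \<and> (y, w) \<in> ((E \<inter> B \<times> B) \<union> (E \<inter> B \<times> B)\<inverse>)\<^sup>*" if "(y, w) \<in> ?R\<^sup>*" for w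
      using that
    proof (induction rule: rtrancl_induct)
      case (step w w')
      have "w' \<in> V" using step(2) EV by (auto simp: level_edges_def)
      with step(1,2) yV have "(y, w') \<in> level_conn V E \<kappa>"
        by (auto simp: level_conn_def intro: rtrancl.rtrancl_into_rtrancl)
      then have "w' \<in> B" using in_quotient_imp_closed[OF equiv_level_conn B y] by blast
      moreover have "(w, w') \<in> (E \<inter> B \<times> B) \<union> (E \<inter> B \<times> B)\<inverse>"
        using step(2,3) \<open>w' \<in> B\<close> by (auto simp: level_edges_def)
      ultimately show ?case using step(3) by (meson rtrancl.rtrancl_into_rtrancl)
    qed (use y in simp)
    moreover have "(y, z) \<in> ?R\<^sup>*"
      using in_quotient_imp_in_rel[OF equiv_level_conn B, of y z] y z by (simp add: level_conn_def)
    ultimately show ?thesis by blast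
  qed
  then show ?thesis using partition by (auto simp: covering_def)
qed

lemma Min_block_of_level: "v \<in> V \<Longrightarrow> \<kappa> (Min (block_of (V // level_conn V E \<kappa>) v)) = \<kappa> v"
  using block_of_in block in_quotient_imp_in_rel[OF equiv_level_conn] level_conn_imp_eq
  by (metis empty_subsetI insert_subset)

lemma restrict_to_minima_mono_surjs:
  "restrict_to_minima (V // level_conn V E \<kappa>) \<kappa> \<in>
    mono_surjs (<) (Min ` (V // level_conn V E \<kappa>)) (quotient_edges E (V // level_conn V E \<kappa>))"
proof (rule mono_surjsI(1))
  let ?P = "V // level_conn V E \<kappa>" and ?\<tau> = "restrict_to_minima (V // level_conn V E \<kappa>) \<kappa>"
  show "\<And>v. v \<notin> Min ` ?P \<Longrightarrow> ?\<tau> v = 0" by (simp add: restrict_to_minima_def)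
  have "?\<tau> ` (Min ` ?P) = \<kappa> ` V"
  proof
    show "?\<tau> ` (Min ` ?P) \<subseteq> \<kappa> ` V" using block by (auto simp: restrict_to_minima_def)
    show "\<kappa> ` V \<subseteq> ?\<tau> ` (Min ` ?P)"
    proof
      fix y assume "y \<in> \<kappa> ` V"
      then obtain v where v: "v \<in> V" "y = \<kappa> v" by auto
      then have "Min (block_of ?P v) \<in> Min ` ?P" using block_of_in by auto
      moreover have "?\<tau> (Min (block_of ?P v)) = y"
        using calculation Min_block_of_level[OF v(1)] v by (simp add: restrict_to_minima_def)
      ultimately show "y \<in> ?\<tau> ` (Min ` ?P)" by (metis image_eqI)
    qed
  qed
  then show "?\<tau> ` (Min ` ?P) = {1..card (\<kappa> ` V)}" using mono_surjsD(2)[OF \<kappa>] by simp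
  fix a b assume "(a, b) \<in> quotient_edges E ?P"
  then obtain B B' u v where BB: "a = Min B" "b = Min B'" "B \<in> ?P" "B' \<in> ?P" "B \<noteq> B'"
    "u \<in> B" "v \<in> B'" "(u, v) \<in> E" by (auto simp: quotient_edges_def)
  have "\<kappa> u \<noteq> \<kappa> v"
  proof
    assume "\<kappa> u = \<kappa> v"
    then have "(u, v) \<in> level_conn V E \<kappa>" using BB EV by (auto simp: level_conn_def level_edges_def)
    then show False using in_quotient_imp_closed[OF equiv_level_conn BB(3,6)] block_unique BB by blast
  qed
  moreover have "\<kappa> (Min B) = \<kappa> u" "\<kappa> (Min B') = \<kappa> v"
    using BB block in_quotient_imp_in_rel[OF equiv_level_conn] level_conn_imp_eq
    by (metis empty_subsetI insert_subset)+
  ultimately show "?\<tau> a < ?\<tau> b"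
    using mono_surjsD(3)[OF \<kappa> BB(8)] BB by (auto simp: restrict_to_minima_def)
qed

lemma lift_restrict_to_minima:
  "lift_surj (V // level_conn V E \<kappa>) (restrict_to_minima (V // level_conn V E \<kappa>) \<kappa>) V = \<kappa>"
proof
  fix v show "lift_surj (V // level_conn V E \<kappa>) (restrict_to_minima (V // level_conn V E \<kappa>) \<kappa>) V v = \<kappa> v"
    using block_of_in Min_block_of_level mono_surjsD(1)[OF \<kappa>, of v]
    by (auto simp: lift_surj_def restrict_to_minima_def)
qed

end

lemma covering_surj_bij:
  assumes fin: "finite V" and EV: "E \<subseteq> V \<times> V"
  shows "bij_betw (\<lambda>(P, \<tau>). lift_surj P \<tau> V)
    (SIGMA P:{P. covering V E P}. mono_surjs (<) (Min ` P) (quotient_edges E P)) (mono_surjs (\<le>) V E)"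
    (is "bij_betw ?lift ?S ?T")
proof -
  let ?split = "\<lambda>\<kappa>. (V // level_conn V E \<kappa>, restrict_to_minima (V // level_conn V E \<kappa>) \<kappa>)"
  have "?lift x \<in> ?T \<and> ?split (?lift x) = x" if x_in: "x \<in> ?S" for x
  proof -
    obtain P \<tau> where x: "x = (P, \<tau>)" and cov: "covering V E P"
      and \<tau>: "\<tau> \<in> mono_surjs (<) (Min ` P) (quotient_edges E P)" by (cases x) (use x_in in auto)
    show ?thesis
      using x lift_surj_mono_surjs[OF cov fin EV \<tau>] quotient_level_conn_lift_surj[OF cov fin EV \<tau>]
        restrict_lift_surj[OF cov fin EV \<tau>] by simp
  qed
  moreover have "?split \<kappa> \<in> ?S \<and> ?lift (?split \<kappa>) = \<kappa>" if "\<kappa> \<in> ?T" for \<kappa>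
    using lift_restrict_to_minima[OF fin EV that] covering_level_conn[OF fin EV that]
      restrict_to_minima_mono_surjs[OF fin EV that] by simp
  ultimately show ?thesis by (intro bij_betw_byWitness[where f' = ?split]) auto
qed

lemma arb_tensor_sum: "arb_tensor (\<Sum>x\<in>A. f x) = (\<Sum>x\<in>A. arb_tensor (f x))"
  using sum_comp_morphism[of arb_tensor f A] by (simp add: arb_tensor_def comp_def)

lemma arb_tensor_single: "arb_tensor {#(F1, F2)#} = tensor (arb F1) (arb F2)"
  by (simp add: arb_tensor_def)

lemma tensor_singleton: "tensor {#a#} B = image_mset (Pair a) B"
  by (simp add: tensor_def)

lemma tensor_sum_left: "tensor (\<Sum>x\<in>A. f x) B = (\<Sum>x\<in>A. tensor (f x) B)"
  using sum_comp_morphism[of "\<lambda>X. tensor X B" f A] by (simp add: tensor_def comp_def)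

lemma arb_tensor_coprod_forest_eq_level_expansion:
  assumes fin: "finite V" and EV: "E \<subseteq> V \<times> V"
  shows "arb_tensor (coprod_forest (V, E, d)) = level_expansion V E d"
proof -
  let ?C = "{P. covering V E P}"
  let ?g = "\<lambda>(P, \<tau>). image_mset (Pair (surj_word (Min ` P) (quotient_dec V d P) \<tau>))
    (arb (V, block_edges E P, d))"
  have finC: "finite ?C"
    by (rule finite_subset[OF _ finitely_many_partition_on[OF fin]]) (auto simp: covering_def)
  have finP: "\<And>P. P \<in> ?C \<Longrightarrow> finite P"
    using fin by (auto simp: covering_def intro: finite_elements)
  have "arb_tensor (coprod_forest (V, E, d)) =
      (\<Sum>P\<in>?C. tensor (arb (Min ` P, quotient_edges E P, quotient_dec V d P)) (arb (V, block_edges E P, d)))"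
    by (simp add: coprod_forest_def arb_tensor_sum contract_eq subforest_eq arb_tensor_single)
  also have "\<dots> = (\<Sum>P\<in>?C. \<Sum>\<tau>\<in>mono_surjs (<) (Min ` P) (quotient_edges E P). ?g (P, \<tau>))"
  proof (intro sum.cong refl)
    fix P assume "P \<in> ?C"
    then have arb_P: "arb (Min ` P, quotient_edges E P, quotient_dec V d P) =
        (\<Sum>\<tau>\<in>mono_surjs (<) (Min ` P) (quotient_edges E P). {#surj_word (Min ` P) (quotient_dec V d P) \<tau>#})"
      using finP by (intro arb_eq_sum_mono_surjs) (auto simp: quotient_edges_def)
    show "tensor (arb (Min ` P, quotient_edges E P, quotient_dec V d P)) (arb (V, block_edges E P, d)) =
        (\<Sum>\<tau>\<in>mono_surjs (<) (Min ` P) (quotient_edges E P). ?g (P, \<tau>))"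
      unfolding arb_P tensor_sum_left tensor_singleton by simp
  qed
  also have "\<dots> = sum ?g (SIGMA P:?C. mono_surjs (<) (Min ` P) (quotient_edges E P))"
    using finC finP by (subst sum.Sigma) (auto simp: finite_mono_surjs)
  also have "\<dots> = level_expansion V E d"
    unfolding level_expansion_def sum.reindex_bij_betw[OF covering_surj_bij[OF fin EV], symmetric]
    by (intro sum.cong refl)
      (auto simp: surj_word_lift_surj[OF _ fin EV] level_edges_lift_surj[OF _ fin EV])
  finally show ?thesis .
qed

theorem theorem5p1:
  fixes V :: "nat set" and E :: "(nat \<times> nat) set" and d :: "nat \<Rightarrow> 'a::ab_semigroup_add"
  assumes "is_forest V E"
  shows "\<forall>w1 w2. (of_nat (count (coprod_words (arb (V, E, d))) (w1, w2)) :: 'k::field)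
                = of_nat (count (arb_tensor (coprod_forest (V, E, d))) (w1, w2))"
proof -
  have fin: "finite V" and EV: "E \<subseteq> V \<times> V" using assms by (auto simp: is_forest_def)
  have "coprod_words (arb (V, E, d)) = arb_tensor (coprod_forest (V, E, d))"
    unfolding coprod_words_arb_eq_level_expansion[OF fin EV]
      arb_tensor_coprod_forest_eq_level_expansion[OF fin EV] ..
  then show ?thesis by simp
qed

end
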